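(* Let $D>0$, $r\in(0,1)$, $\theta_m=Dr^m$, $\mathcal B=\mathcal B(\{\theta_m\})$, $b_1,b_2>0$. There exists $C_4>0$ depending only on $b_1,b_2$ (besides $N,D,r$) with the following property: for every $q\in\mathbb N$ and $R>e^{h_{\mathrm{top}}(\sigma_{\mathbf A})}$ there exists $N_1\in\mathbb N$, depending only on $q$ and $R$, such that for all $n\ge N_1$ and every $g\in V$ satisfying (H), $a_n(\mathscr L_g^q)\le\left(\frac{C_4}{r^2}\right)^q(n-1)^{-2q\ln(1/r)/\ln R}$.
   Context: $\Sigma_{\mathbf A}^+$ is the one-sided Markov shift of an $N\times N$ zero-one aperiodic matrix $\mathbf A$, $\sigma_{\mathbf A}$ the shift, $h_{\mathrm{top}}(\sigma_{\mathbf A})$ its topological entropy. $\mathrm{var}_k(\phi)=\sup\{|\phi(\omega)-\phi(\omega')|:\omega_j=\omega'_j,\ 0\le j\le k-1\}$; $V=\{\phi:\mathrm{var}_k(\phi)^{1/k}\to0\}$. $(\mathscr L_g\phi)(\omega)=\sum_{\sigma_{\mathbf A}\omega'=\omega}e^{g(\omega')}\phi(\omega')$, viewed as an operator on $\mathcal B$. $\mathcal B(\{\theta_m\})=\{\phi\in V:\exists C\ge0,\ \mathrm{var}_k(\phi)\le C\theta_{k+1}^k\ \forall k\ge0\}$ with norm $\|\phi\|_\infty+\inf C$. Condition (H) on $g\in V$: $e^{\max\mathrm{Re}\,g}\le b_1$ and $\mathrm{var}_k(g)\le b_2\theta_k^k$ for all $k\in\mathbb N$. For a bounded operator $T$ on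 a Banach space $E$, $a_n(T)=\inf\{\|T-A\|:A\in\mathfrak L(E),\ \mathrm{rank}\,A<n\}$. *)

theory Defs
  imports Complex_Main
begin

type_synonym seq = "nat \<Rightarrow> nat"
type_synonym cfun = "seq \<Rightarrow> complex"

definition zero_one_matrix :: "nat \<Rightarrow> (nat \<Rightarrow> nat \<Rightarrow> nat) \<Rightarrow> bool" where
  "zero_one_matrix N A \<longleftrightarrow> (\<forall>i<N. \<forall>j<N. A i j \<in> {0, 1})"

fun mpow :: "nat \<Rightarrow> (nat \<Rightarrow> nat \<Rightarrow> nat) \<Rightarrow> nat \<Rightarrow> nat \<Rightarrow> nat \<Rightarrow> nat" where
  "mpow N A 0 i j = (if i = j then 1 else 0)"
| "mpow N A (Suc m) i j = (\<Sum>k<N. mpow N A m i k * A k j)"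

definition aperiodic :: "nat \<Rightarrow> (nat \<Rightarrow> nat \<Rightarrow> nat) \<Rightarrow> bool" where
  "aperiodic N A \<longleftrightarrow> (\<exists>M>0. \<forall>i<N. \<forall>j<N. mpow N A M i j > 0)"

definition Sig :: "nat \<Rightarrow> (nat \<Rightarrow> nat \<Rightarrow> nat) \<Rightarrow> seq set" where
  "Sig N A = {\<omega>. (\<forall>j. \<omega> j < N) \<and> (\<forall>j. A (\<omega> j) (\<omega> (Suc j)) = 1)}"

definition shiftA :: "seq \<Rightarrow> seq" where
  "shiftA \<omega> = (\<lambda>j. \<omega> (Suc j))"

definition words :: "nat \<Rightarrow> (nat \<Rightarrow> nat \<Rightarrow> nat) \<Rightarrow> nat \<Rightarrow> nat list set" where
  "words N A n = {w. length w = n \<and> (\<forall>i<n. w ! i < N) \<and>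
                     (\<forall>i. Suc i < n \<longrightarrow> A (w ! i) (w ! Suc i) = 1)}"

definition htop :: "nat \<Rightarrow> (nat \<Rightarrow> nat \<Rightarrow> nat) \<Rightarrow> real" where
  "htop N A = lim (\<lambda>n. ln (real (card (words N A n))) / real n)"

definition varset :: "nat \<Rightarrow> (nat \<Rightarrow> nat \<Rightarrow> nat) \<Rightarrow> nat \<Rightarrow> cfun \<Rightarrow> real set" where
  "varset N A k \<phi> = {cmod (\<phi> \<omega> - \<phi> \<omega>') | \<omega> \<omega>'.
       \<omega> \<in> Sig N A \<and> \<omega>' \<in> Sig N A \<and> (\<forall>j<k. \<omega> j = \<omega>' j)}"

definition var :: "nat \<Rightarrow> (nat \<Rightarrow> nat \<Rightarrow> nat) \<Rightarrow> nat \<Rightarrow> cfun \<Rightarrow> real" where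
  "var N A k \<phi> = Sup (varset N A k \<phi>)"

definition Vsp :: "nat \<Rightarrow> (nat \<Rightarrow> nat \<Rightarrow> nat) \<Rightarrow> cfun set" where
  "Vsp N A = {\<phi>. (\<forall>k. bdd_above (varset N A k \<phi>)) \<and>
                 (\<lambda>k. var N A k \<phi> powr (1 / real k)) \<longlonglongrightarrow> 0}"

text \<open>The Banach space B({theta_m}); functions are represented as vanishing off Sig.\<close>

definition Bconsts :: "nat \<Rightarrow> (nat \<Rightarrow> nat \<Rightarrow> nat) \<Rightarrow> (nat \<Rightarrow> real) \<Rightarrow> cfun \<Rightarrow> real set" where
  "Bconsts N A \<theta> \<phi> = {C. C \<ge> 0 \<and> (\<forall>k. var N A k \<phi> \<le> C * \<theta> (Suc k) ^ k)}"

definition Bsp :: "nat \<Rightarrow> (nat \<Rightarrow> nat \<Rightarrow> nat) \<Rightarrow> (nat \<Rightarrow> real) \<Rightarrow> cfun set" where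
  "Bsp N A \<theta> = {\<phi>. \<phi> \<in> Vsp N A \<and> (\<forall>\<omega>. \<omega> \<notin> Sig N A \<longrightarrow> \<phi> \<omega> = 0) \<and> Bconsts N A \<theta> \<phi> \<noteq> {}}"

definition supnorm :: "nat \<Rightarrow> (nat \<Rightarrow> nat \<Rightarrow> nat) \<Rightarrow> cfun \<Rightarrow> real" where
  "supnorm N A \<phi> = Sup {cmod (\<phi> \<omega>) | \<omega>. \<omega> \<in> Sig N A}"

definition Bnorm :: "nat \<Rightarrow> (nat \<Rightarrow> nat \<Rightarrow> nat) \<Rightarrow> (nat \<Rightarrow> real) \<Rightarrow> cfun \<Rightarrow> real" where
  "Bnorm N A \<theta> \<phi> = supnorm N A \<phi> + Inf (Bconsts N A \<theta> \<phi>)"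

definition Lop :: "nat \<Rightarrow> (nat \<Rightarrow> nat \<Rightarrow> nat) \<Rightarrow> cfun \<Rightarrow> cfun \<Rightarrow> cfun" where
  "Lop N A g \<phi> \<omega> = (\<Sum>\<omega>'\<in>{\<omega>'. \<omega>' \<in> Sig N A \<and> shiftA \<omega>' = \<omega>}. exp (g \<omega>') * \<phi> \<omega>')"

definition bounded_op :: "nat \<Rightarrow> (nat \<Rightarrow> nat \<Rightarrow> nat) \<Rightarrow> (nat \<Rightarrow> real) \<Rightarrow> (cfun \<Rightarrow> cfun) \<Rightarrow> bool" where
  "bounded_op N A \<theta> T \<longleftrightarrow>
     (\<forall>\<phi>\<in>Bsp N A \<theta>. T \<phi> \<in> Bsp N A \<theta>) \<and>
     (\<forall>\<phi>\<in>Bsp N A \<theta>. \<forall>\<psi>\<in>Bsp N A \<theta>. T (\<lambda>\<omega>. \<phi> \<omega> + \<psi> \<omega>) = (\<lambda>\<omega>. T \<phi> \<omega> + T \<psi> \<omega>)) \<and>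
     (\<forall>c. \<forall>\<phi>\<in>Bsp N A \<theta>. T (\<lambda>\<omega>. c * \<phi> \<omega>) = (\<lambda>\<omega>. c * T \<phi> \<omega>)) \<and>
     (\<exists>K. \<forall>\<phi>\<in>Bsp N A \<theta>. Bnorm N A \<theta> (T \<phi>) \<le> K * Bnorm N A \<theta> \<phi>)"

definition opnorm :: "nat \<Rightarrow> (nat \<Rightarrow> nat \<Rightarrow> nat) \<Rightarrow> (nat \<Rightarrow> real) \<Rightarrow> (cfun \<Rightarrow> cfun) \<Rightarrow> real" where
  "opnorm N A \<theta> T = Sup {Bnorm N A \<theta> (T \<phi>) | \<phi>. \<phi> \<in> Bsp N A \<theta> \<and> Bnorm N A \<theta> \<phi> \<le> 1}"

definition rank_lt :: "nat \<Rightarrow> (nat \<Rightarrow> nat \<Rightarrow> nat) \<Rightarrow> (nat \<Rightarrow> real) \<Rightarrow> (cfun \<Rightarrow> cfun) \<Rightarrow> nat \<Rightarrow> bool" where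
  "rank_lt N A \<theta> T n \<longleftrightarrow>
     (\<exists>m<n. \<exists>f :: nat \<Rightarrow> cfun. \<forall>\<phi>\<in>Bsp N A \<theta>. \<exists>c :: nat \<Rightarrow> complex.
        T \<phi> = (\<lambda>\<omega>. \<Sum>i<m. c i * f i \<omega>))"

definition approx_num :: "nat \<Rightarrow> (nat \<Rightarrow> nat \<Rightarrow> nat) \<Rightarrow> (nat \<Rightarrow> real) \<Rightarrow> nat \<Rightarrow> (cfun \<Rightarrow> cfun) \<Rightarrow> real" where
  "approx_num N A \<theta> n T =
     Inf {opnorm N A \<theta> (\<lambda>\<phi> \<omega>. T \<phi> \<omega> - S \<phi> \<omega>) | S. bounded_op N A \<theta> S \<and> rank_lt N A \<theta> S n}"

definition condH :: "nat \<Rightarrow> (nat \<Rightarrow> nat \<Rightarrow> nat) \<Rightarrow> (nat \<Rightarrow> real) \<Rightarrow> real \<Rightarrow> real \<Rightarrow> cfun \<Rightarrow> bool" where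
  "condH N A \<theta> b1 b2 g \<longleftrightarrow>
     (\<forall>\<omega>\<in>Sig N A. exp (Re (g \<omega>)) \<le> b1) \<and> (\<forall>k\<ge>1. var N A k g \<le> b2 * \<theta> k ^ k)"

end

theory Submission
  imports Defs "HOL-Analysis.Analysis"
begin

(* Split phi in B into cyl_approx m phi, which is constant on cylinders of length m and therefore
   has rank at most the number of admissible words of length m, plus a remainder whose sup norm is
   at most theta_{m+1}^m |phi| and whose variations of order below m vanish.  A Lasota-Yorke
   inequality for L_g, iterated q times, bounds the B-norm of L_g^q applied to the remainder by
   about M^q r^(2q(m-q)): every application shifts the variation order by one, and the weights
   theta_{k+1}^k ~ r^(k^2) then gain a factor r^(2m) per step.  By Fekete's lemma there are fewer
   than R'^m words of length m for any R' > exp h_top, so m ~ ln(n-1) / ln R' gives rank < n and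
   the decay (n-1)^(-2q ln(1/r) / ln R). *)

lemma norm_exp_diff_le:
  fixes x y :: complex
  shows "cmod (exp x - exp y) \<le> exp (Re y) * exp (cmod (x - y)) * cmod (x - y)"
proof (rule field_differentiable_bound[where S="cball y (cmod (x - y))" and f=exp and f'=exp])
  show "(exp has_field_derivative exp z) (at z within cball y (cmod (x - y)))" for z
    by (rule DERIV_subset[OF DERIV_exp]) simp
  show "cmod (exp z) \<le> exp (Re y) * exp (cmod (x - y))" if "z \<in> cball y (cmod (x - y))" for z
  proof -
    have "Re z - Re y \<le> cmod (z - y)" using complex_Re_le_cmod[of "z - y"] by simp
    also have "\<dots> \<le> cmod (x - y)" using that by (simp add: dist_norm norm_minus_commute)
    finally show ?thesis by (simp flip: exp_add)
  qed
qed (auto simp: dist_norm norm_minus_commute)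

lemma norm_sum_le_N:
  fixes F :: "nat \<Rightarrow> complex"
  assumes "I \<subseteq> {..<N}" "\<And>a. a \<in> I \<Longrightarrow> cmod (F a) \<le> B" "B \<ge> 0"
  shows "cmod (\<Sum>a\<in>I. F a) \<le> real N * B"
proof -
  have "finite I" using assms(1) finite_subset by blast
  then have "cmod (\<Sum>a\<in>I. F a) \<le> real (card I) * B"
    using norm_sum[of F I] sum_bounded_above[of I "\<lambda>a. cmod (F a)" B] assms(2) by fastforce
  also have "\<dots> \<le> real N * B"
    using card_mono[OF _ assms(1)] assms(3) by (intro mult_right_mono) auto
  finally show ?thesis .
qed

lemma subadditive_mult_add_le:
  fixes u :: "nat \<Rightarrow> real"
  assumes "\<And>m n. u (m + n) \<le> u m + u n"
  shows "u (q * k + s) \<le> real q * u k + u s"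
proof (induction q)
  case (Suc q)
  have "u (Suc q * k + s) \<le> u k + u (q * k + s)" using assms[of k "q * k + s"] by (simp add: add.assoc)
  with Suc show ?case by (simp add: algebra_simps)
qed simp

lemma subadditive_quotient_tendsto_Inf:
  fixes u :: "nat \<Rightarrow> real"
  assumes nonneg: "\<And>n. u n \<ge> 0" and subadd: "\<And>m n. u (m + n) \<le> u m + u n"
  shows "(\<lambda>n. u n / real n) \<longlonglongrightarrow> (INF n\<in>{1..}. u n / real n)"
proof (rule LIMSEQ_I)
  let ?L = "INF n\<in>{1..}. u n / real n"
  have bdd: "bdd_below ((\<lambda>n. u n / real n) ` {1..})"
    using nonneg by (intro bdd_belowI[of _ 0]) auto
  fix \<epsilon> :: real assume e: "\<epsilon> > 0"
  obtain k where k: "k \<ge> 1" "u k / real k < ?L + \<epsilon> / 2"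
    using cINF_less_iff[OF _ bdd, of "?L + \<epsilon> / 2"] e by auto
  define B where "B = (\<Sum>s<k. u s)"
  have B: "u s \<le> B" if "s < k" for s
    unfolding B_def using that nonneg by (intro member_le_sum) auto
  obtain n0 :: nat where n0: "real n0 > 2 * B / \<epsilon>" using reals_Archimedean2 by blast
  show "\<exists>n0. \<forall>n\<ge>n0. norm (u n / real n - ?L) < \<epsilon>"
  proof (intro exI allI impI)
    fix n assume n: "n \<ge> max 1 n0"
    then have np: "real n > 0" by simp
    have low: "?L \<le> u n / real n" using n bdd by (intro cINF_lower) auto
    have "u n \<le> real (n div k) * u k + u (n mod k)"
      using subadditive_mult_add_le[OF subadd, of "n div k" k "n mod k"] by simp
    also have "\<dots> \<le> real n / real k * u k + B"
    proof (intro add_mono mult_right_mono)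
      have "real (n div k) * real k \<le> real n"
        by (metis of_nat_le_iff of_nat_mult div_times_less_eq_dividend)
      then show "real (n div k) \<le> real n / real k" using k(1) by (simp add: field_simps)
    qed (use k(1) B nonneg in auto)
    finally have "u n / real n \<le> u k / real k + B / real n"
      using np by (simp add: field_simps)
    also have "B / real n < \<epsilon> / 2"
    proof -
      have "2 * B < \<epsilon> * real n0" using n0 e by (simp add: field_simps)
      also have "\<dots> \<le> \<epsilon> * real n" using n e by simp
      finally show ?thesis using np by (simp add: field_simps)
    qed
    finally show "norm (u n / real n - ?L) < \<epsilon>" using low k(2) by simp
  qed
qed

lemma geometric_le_powr_eventually:
  fixes r \<Gamma> lR' lR :: real and q :: nat
  assumes r: "0 < r" "r < 1" and lR: "0 < lR'" "lR' < lR" and \<Gamma>: "\<Gamma> > 0" and q: "q \<ge> 1"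
  shows "\<exists>X. \<forall>x\<ge>X. \<forall>m\<ge>q. real m > ln x / lR' - 1 \<longrightarrow>
           \<Gamma> * r ^ (2 * q * (m - q)) \<le> (1 / r\<^sup>2) ^ q * x powr (- 2 * real q * ln (1 / r) / lR)"
proof -
  define \<rho> where "\<rho> = ln (1 / r)"
  define c where "c = 2 * real q * \<rho>"
  define \<delta> where "\<delta> = 1 / lR' - 1 / lR"
  have c: "c > 0" using q r by (simp add: c_def \<rho>_def)
  have \<delta>: "\<delta> > 0" using lR by (simp add: \<delta>_def frac_less2)
  have r_exp: "r = exp (- \<rho>)" using r by (simp add: \<rho>_def ln_div)
  show ?thesis
  proof (intro exI[of _ "max 1 (exp ((ln \<Gamma> + real q * c) / (c * \<delta>)))"] allI impI)
    fix x :: real and m :: nat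
    assume x: "max 1 (exp ((ln \<Gamma> + real q * c) / (c * \<delta>))) \<le> x" and "q \<le> m" and m: "real m > ln x / lR' - 1"
    have x0: "x > 0" using x by simp
    have "(ln \<Gamma> + real q * c) / (c * \<delta>) \<le> ln x" using x x0 by (simp add: ln_ge_iff)
    then have lnx: "ln \<Gamma> + real q * c \<le> c * \<delta> * ln x" using c \<delta> by (simp add: field_simps)
    have "c * real m > c * (ln x / lR') - c"
      using mult_strict_left_mono[OF m c] by (simp add: algebra_simps)
    then have key: "ln \<Gamma> - c * (real m - real q) \<le> c - c * ln x / lR"
      using lnx by (simp add: \<delta>_def algebra_simps)
    have "r ^ (2 * q * (m - q)) = exp (real (2 * q * (m - q)) * (- \<rho>))"
      by (subst r_exp) (rule exp_of_nat_mult[symmetric])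
    also have "real (2 * q * (m - q)) = 2 * real q * (real m - real q)"
      using \<open>q \<le> m\<close> by (simp add: of_nat_diff)
    finally have "r ^ (2 * q * (m - q)) = exp (- (c * (real m - real q)))"
      by (simp add: c_def algebra_simps)
    then have "\<Gamma> * r ^ (2 * q * (m - q)) = exp (ln \<Gamma> - c * (real m - real q))"
      using \<Gamma> by (simp add: exp_diff exp_minus divide_inverse)
    also have "\<dots> \<le> exp (c - c * ln x / lR)" using key by simp
    also have "\<dots> = (1 / r\<^sup>2) ^ q * x powr (- 2 * real q * ln (1 / r) / lR)"
      using x0 by (subst (1 2) r_exp)
        (simp add: powr_def exp_diff exp_minus c_def \<rho>_def power_divide exp_of_nat_mult[symmetric] field_simps)
    finally show "\<Gamma> * r ^ (2 * q * (m - q)) \<le> (1 / r\<^sup>2) ^ q * x powr (- 2 * real q * ln (1 / r) / lR)" .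
  qed
qed

section \<open>The shift space, its words and the transfer operator\<close>

lemma Sig_shiftA: "\<omega> \<in> Sig N A \<Longrightarrow> shiftA \<omega> \<in> Sig N A"
  by (simp add: Sig_def shiftA_def)

lemma Sig_case_nat: "\<omega> \<in> Sig N A \<Longrightarrow> a < N \<Longrightarrow> A a (\<omega> 0) = 1 \<Longrightarrow> case_nat a \<omega> \<in> Sig N A"
  unfolding Sig_def by (auto split: nat.split)

lemma mpow_Suc_left:
  assumes "i < N" "j < N"
  shows "mpow N A (Suc m) i j = (\<Sum>k<N. A i k * mpow N A m k j)"
  using assms(2)
proof (induction m arbitrary: j)
  case 0
  have "(\<Sum>k<N. mpow N A 0 i k * A k j) = (\<Sum>k<N. if k = i then A i j else 0)"
    by (rule sum.cong) auto
  moreover have "(\<Sum>k<N. A i k * mpow N A 0 k j) = (\<Sum>k<N. if k = j then A i j else 0)"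
    by (rule sum.cong) auto
  ultimately show ?case using assms(1) 0 by (simp only: mpow.simps(2) sum.delta finite_lessThan lessThan_iff if_True)
next
  case (Suc m)
  have "mpow N A (Suc (Suc m)) i j = (\<Sum>k<N. (\<Sum>l<N. A i l * mpow N A m l k) * A k j)"
    using Suc.IH by simp
  also have "\<dots> = (\<Sum>k<N. \<Sum>l<N. A i l * mpow N A m l k * A k j)"
    by (simp add: sum_distrib_right)
  also have "\<dots> = (\<Sum>l<N. \<Sum>k<N. A i l * mpow N A m l k * A k j)"
    by (rule sum.swap)
  also have "\<dots> = (\<Sum>l<N. A i l * (\<Sum>k<N. mpow N A m l k * A k j))"
    by (simp add: sum_distrib_left mult.assoc)
  finally show ?case by simp
qed

lemma aperiodic_has_successor:
  assumes "zero_one_matrix N A" "aperiodic N A" "i < N"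
  shows "\<exists>k<N. A i k = 1"
proof -
  obtain M where "M > 0" "\<forall>i<N. \<forall>j<N. mpow N A M i j > 0" using assms(2) unfolding aperiodic_def by blast
  then obtain M' where "mpow N A (Suc M') i i > 0" using assms(3) by (cases M) auto
  then have "0 < (\<Sum>k<N. A i k * mpow N A M' k i)"
    using mpow_Suc_left[OF assms(3) assms(3), of A M'] by (simp del: mpow.simps)
  then have "(\<Sum>k<N. A i k * mpow N A M' k i) \<noteq> 0" by (rule gr_implies_not0)
  then obtain k where k: "k < N" "A i k \<noteq> 0" by auto
  moreover have "A i k \<in> {0, 1}" using assms(1,3) k(1) unfolding zero_one_matrix_def by blast
  ultimately have "A i k = 1" by auto
  with k(1) show ?thesis by blast
qed

lemma aperiodic_Sig_nonempty:
  assumes "N \<ge> 1" "zero_one_matrix N A" "aperiodic N A"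
  shows "Sig N A \<noteq> {}"
proof -
  define next_state where "next_state = (\<lambda>x. SOME k. k < N \<and> A x k = 1)"
  define \<omega> where "\<omega> = rec_nat 0 (\<lambda>_. next_state)"
  have step: "\<omega> n < N \<Longrightarrow> \<omega> (Suc n) < N \<and> A (\<omega> n) (\<omega> (Suc n)) = 1" for n
    using someI_ex[OF aperiodic_has_successor[OF assms(2,3)]] by (simp add: \<omega>_def next_state_def)
  have lt: "\<omega> n < N" for n
    by (induction n) (use assms(1) step in \<open>auto simp: \<omega>_def\<close>)
  have "\<omega> \<in> Sig N A" unfolding Sig_def using lt step by simp
  then show ?thesis by blast
qed

definition cyl_word :: "nat \<Rightarrow> seq \<Rightarrow> nat list" where "cyl_word m \<omega> = map \<omega> [0..<m]"

lemma length_cyl_word [simp]: "length (cyl_word m \<omega>) = m" by (simp add: cyl_word_def)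

lemma cyl_word_eq_iff: "cyl_word m \<omega> = cyl_word m \<omega>' \<longleftrightarrow> (\<forall>i<m. \<omega> i = \<omega>' i)"
  unfolding cyl_word_def by (auto simp: list_eq_iff_nth_eq)

lemma cyl_word_in_words: "\<omega> \<in> Sig N A \<Longrightarrow> cyl_word m \<omega> \<in> words N A m"
  unfolding words_def Sig_def cyl_word_def by auto

lemma finite_words: "finite (words N A m)"
proof (rule finite_subset)
  show "words N A m \<subseteq> {xs. set xs \<subseteq> {..<N} \<and> length xs = m}"
    unfolding words_def by (auto simp: in_set_conv_nth)
qed (simp add: finite_lists_length_eq)

lemma card_words_add_le: "card (words N A (m + n)) \<le> card (words N A m) * card (words N A n)"
proof -
  have "card (words N A (m + n)) \<le> card (words N A m \<times> words N A n)"
  proof (rule card_inj_on_le[where f="\<lambda>u. (take m u, drop m u)"])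
    show "inj_on (\<lambda>u. (take m u, drop m u)) (words N A (m + n))"
      by (rule inj_onI) (metis append_take_drop_id prod.inject)
    show "(\<lambda>u. (take m u, drop m u)) ` words N A (m + n) \<subseteq> words N A m \<times> words N A n"
      unfolding words_def by (auto simp: add.commute[of m] add.left_commute)
  qed (simp add: finite_words)
  then show ?thesis by (simp add: card_cartesian_product)
qed

definition cyl_rep :: "nat \<Rightarrow> (nat \<Rightarrow> nat \<Rightarrow> nat) \<Rightarrow> nat list \<Rightarrow> seq" where
  "cyl_rep N A u = (SOME \<omega>'. \<omega>' \<in> Sig N A \<and> cyl_word (length u) \<omega>' = u)"

definition cyl_approx :: "nat \<Rightarrow> (nat \<Rightarrow> nat \<Rightarrow> nat) \<Rightarrow> nat \<Rightarrow> cfun \<Rightarrow> cfun" where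
  "cyl_approx N A m \<phi> \<omega> = (if \<omega> \<in> Sig N A then \<phi> (cyl_rep N A (cyl_word m \<omega>)) else 0)"

definition cyl_ind :: "nat \<Rightarrow> (nat \<Rightarrow> nat \<Rightarrow> nat) \<Rightarrow> nat list \<Rightarrow> cfun" where
  "cyl_ind N A u \<omega> = (if \<omega> \<in> Sig N A \<and> cyl_word (length u) \<omega> = u then 1 else 0)"

lemma cyl_rep:
  assumes "\<omega> \<in> Sig N A"
  shows "cyl_rep N A (cyl_word m \<omega>) \<in> Sig N A" "\<forall>i<m. cyl_rep N A (cyl_word m \<omega>) i = \<omega> i"
proof -
  have "\<exists>\<omega>'. \<omega>' \<in> Sig N A \<and> cyl_word (length (cyl_word m \<omega>)) \<omega>' = cyl_word m \<omega>" using assms by auto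
  then have "cyl_rep N A (cyl_word m \<omega>) \<in> Sig N A
      \<and> cyl_word (length (cyl_word m \<omega>)) (cyl_rep N A (cyl_word m \<omega>)) = cyl_word m \<omega>"
    unfolding cyl_rep_def by (rule someI_ex)
  then show "cyl_rep N A (cyl_word m \<omega>) \<in> Sig N A" "\<forall>i<m. cyl_rep N A (cyl_word m \<omega>) i = \<omega> i"
    by (auto simp: cyl_word_eq_iff)
qed

lemma cyl_approx_eq_sum:
  "cyl_approx N A m \<phi> = (\<lambda>\<omega>. \<Sum>u\<in>words N A m. \<phi> (cyl_rep N A u) * cyl_ind N A u \<omega>)"
proof
  fix \<omega>
  show "cyl_approx N A m \<phi> \<omega> = (\<Sum>u\<in>words N A m. \<phi> (cyl_rep N A u) * cyl_ind N A u \<omega>)"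
  proof (cases "\<omega> \<in> Sig N A")
    case True
    have "(\<Sum>u\<in>words N A m. \<phi> (cyl_rep N A u) * cyl_ind N A u \<omega>)
        = (\<Sum>u\<in>words N A m. if cyl_word m \<omega> = u then \<phi> (cyl_rep N A u) else 0)"
      using True by (intro sum.cong) (auto simp: cyl_ind_def words_def)
    also have "\<dots> = \<phi> (cyl_rep N A (cyl_word m \<omega>))"
      using cyl_word_in_words[OF True] finite_words by (simp add: sum.delta)
    finally show ?thesis using True by (simp add: cyl_approx_def)
  qed (simp add: cyl_approx_def cyl_ind_def)
qed

lemma cyl_approx_add: "cyl_approx N A m (\<lambda>\<omega>. \<phi> \<omega> + \<psi> \<omega>) = (\<lambda>\<omega>. cyl_approx N A m \<phi> \<omega> + cyl_approx N A m \<psi> \<omega>)"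
  and cyl_approx_scale: "cyl_approx N A m (\<lambda>\<omega>. c * \<phi> \<omega>) = (\<lambda>\<omega>. c * cyl_approx N A m \<phi> \<omega>)"
  by (auto simp: cyl_approx_def fun_eq_iff)

lemma shiftA_preimage_Sig:
  assumes "\<omega> \<in> Sig N A"
  shows "{\<omega>'. \<omega>' \<in> Sig N A \<and> shiftA \<omega>' = \<omega>} = (\<lambda>a. case_nat a \<omega>) ` {a. a < N \<and> A a (\<omega> 0) = 1}"
proof (intro equalityI subsetI)
  fix x assume "x \<in> {\<omega>'. \<omega>' \<in> Sig N A \<and> shiftA \<omega>' = \<omega>}"
  then have x: "x \<in> Sig N A" "shiftA x = \<omega>" by auto
  then have "x = case_nat (x 0) \<omega>" "x 0 < N" "A (x 0) (\<omega> 0) = 1"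
    unfolding Sig_def shiftA_def by (auto simp: fun_eq_iff split: nat.split)
  then show "x \<in> (\<lambda>a. case_nat a \<omega>) ` {a. a < N \<and> A a (\<omega> 0) = 1}" by blast
qed (use Sig_case_nat[OF assms] in \<open>auto simp: shiftA_def\<close>)

lemma Lop_Sig:
  assumes "\<omega> \<in> Sig N A"
  shows "Lop N A g f \<omega> = (\<Sum>a | a < N \<and> A a (\<omega> 0) = 1. exp (g (case_nat a \<omega>)) * f (case_nat a \<omega>))"
proof -
  have "inj_on (\<lambda>a. case_nat a \<omega>) X" for X
    by (rule inj_onI) (metis nat.simps(4))
  then show ?thesis unfolding Lop_def shiftA_preimage_Sig[OF assms] by (subst sum.reindex) auto
qed

lemma Lpow_not_Sig:
  assumes "q \<ge> 1" "\<omega> \<notin> Sig N A" shows "(Lop N A g ^^ q) f \<omega> = 0"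
proof -
  have no_preimage: "{\<omega>'. \<omega>' \<in> Sig N A \<and> shiftA \<omega>' = \<omega>} = {}" using assms(2) Sig_shiftA by blast
  from assms(1) obtain q' where "q = Suc q'" by (cases q) auto
  then show ?thesis by (simp only: funpow.simps comp_apply Lop_def no_preimage sum.empty)
qed

lemma Lpow_lin:
  "(Lop N A g ^^ q) (\<lambda>\<omega>. c * f \<omega> + d * h \<omega>) = (\<lambda>\<omega>. c * (Lop N A g ^^ q) f \<omega> + d * (Lop N A g ^^ q) h \<omega>)"
proof (induction q)
  case (Suc q)
  then show ?case
    by (auto simp: Lop_def fun_eq_iff sum_distrib_left sum.distrib algebra_simps)
qed simp

lemma Lpow_sum:
  "(Lop N A g ^^ q) (\<lambda>\<omega>. \<Sum>i\<in>I. c i * f i \<omega>) = (\<lambda>\<omega>. \<Sum>i\<in>I. c i * (Lop N A g ^^ q) (f i) \<omega>)"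
proof (induction q)
  case (Suc q)
  have "Lop N A g (\<lambda>\<omega>. \<Sum>i\<in>I. c i * h i \<omega>) = (\<lambda>\<omega>. \<Sum>i\<in>I. c i * Lop N A g (h i) \<omega>)" for h
    unfolding Lop_def by (simp add: fun_eq_iff sum_distrib_left mult_ac sum.swap[where B=I])
  with Suc show ?case by simp
qed simp

lemma norm_diff_le_var:
  assumes "bdd_above (varset N A k f)" "\<omega> \<in> Sig N A" "\<omega>' \<in> Sig N A" "\<forall>i<k. \<omega> i = \<omega>' i"
  shows "cmod (f \<omega> - f \<omega>') \<le> var N A k f"
  unfolding var_def using assms by (intro cSup_upper) (auto simp: varset_def)

definition sup_var_bound :: "nat \<Rightarrow> (nat \<Rightarrow> nat \<Rightarrow> nat) \<Rightarrow> cfun \<Rightarrow> real \<Rightarrow> (nat \<Rightarrow> real) \<Rightarrow> bool" where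
  "sup_var_bound N A f s a \<longleftrightarrow> (\<forall>\<omega>\<in>Sig N A. cmod (f \<omega>) \<le> s) \<and>
     (\<forall>j \<omega> \<omega>'. \<omega> \<in> Sig N A \<longrightarrow> \<omega>' \<in> Sig N A \<longrightarrow> (\<forall>i<j. \<omega> i = \<omega>' i) \<longrightarrow> cmod (f \<omega> - f \<omega>') \<le> a j)"

lemma sup_var_boundD:
  assumes "sup_var_bound N A f s a" "\<omega> \<in> Sig N A"
  shows "cmod (f \<omega>) \<le> s"
    and "\<omega>' \<in> Sig N A \<Longrightarrow> \<forall>i<j. \<omega> i = \<omega>' i \<Longrightarrow> cmod (f \<omega> - f \<omega>') \<le> a j"
  using assms unfolding sup_var_bound_def by blast+

lemma sup_var_bound_mono:
  "sup_var_bound N A f s a \<Longrightarrow> s \<le> s' \<Longrightarrow> (\<And>j. a j \<le> a' j) \<Longrightarrow> sup_var_bound N A f s' a'"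
  unfolding sup_var_bound_def by (meson order_trans)

lemma sup_var_bound_diff:
  assumes "sup_var_bound N A f s1 a1" "sup_var_bound N A h s2 a2"
  shows "sup_var_bound N A (\<lambda>\<omega>. f \<omega> - h \<omega>) (s1 + s2) (\<lambda>j. a1 j + a2 j)"
  unfolding sup_var_bound_def
proof (intro conjI ballI allI impI)
  fix \<omega> assume "\<omega> \<in> Sig N A"
  then show "cmod (f \<omega> - h \<omega>) \<le> s1 + s2"
    using assms[THEN sup_var_boundD(1)] by (meson add_mono norm_triangle_ineq4 order_trans)
next
  fix j \<omega> \<omega>' assume "\<omega> \<in> Sig N A" "\<omega>' \<in> Sig N A" "\<forall>i<j. \<omega> i = \<omega>' i"
  then have "cmod (f \<omega> - f \<omega>') + cmod (h \<omega> - h \<omega>') \<le> a1 j + a2 j"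
    using assms[THEN sup_var_boundD(2)] by (meson add_mono)
  moreover have "cmod (f \<omega> - h \<omega> - (f \<omega>' - h \<omega>')) \<le> cmod (f \<omega> - f \<omega>') + cmod (h \<omega> - h \<omega>')"
    using norm_triangle_ineq4[of "f \<omega> - f \<omega>'" "h \<omega> - h \<omega>'"] by (simp add: algebra_simps)
  ultimately show "cmod (f \<omega> - h \<omega> - (f \<omega>' - h \<omega>')) \<le> a1 j + a2 j" by linarith
qed

section \<open>The weights theta_(k+1)^k\<close>

locale markov_shift =
  fixes N :: nat and A :: "nat \<Rightarrow> nat \<Rightarrow> nat" and D r :: real
  assumes N_pos: "N \<ge> 1" and Sig_nonempty: "Sig N A \<noteq> {}"
    and D_pos: "D > 0" and r_pos: "0 < r" and r_less_1: "r < 1"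
begin

abbreviation \<Theta> :: "nat \<Rightarrow> real" where "\<Theta> \<equiv> \<lambda>m. D * r ^ m"

definition theta_pow :: "nat \<Rightarrow> real" where "theta_pow k = D ^ k * r ^ (k * (k + 1))"

definition D1 :: real where "D1 = max 1 D"

lemma D1_ge_1: "D1 \<ge> 1" and D_le_D1: "D \<le> D1" by (auto simp: D1_def)

lemma theta_pow_pos: "theta_pow k > 0" using D_pos r_pos by (simp add: theta_pow_def)

lemma theta_pow_0 [simp]: "theta_pow 0 = 1" by (simp add: theta_pow_def)

lemma theta_pow_eq: "(D * r ^ Suc k) ^ k = theta_pow k"
  by (simp add: theta_pow_def power_mult_distrib power_mult[symmetric] mult.commute power_add)

lemma theta_pow_add: "theta_pow (a + d) = theta_pow a * D ^ d * r ^ (d * (2 * a + d + 1))"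
proof -
  have "(a + d) * (a + d + 1) = a * (a + 1) + d * (2 * a + d + 1)" by algebra
  then show ?thesis unfolding theta_pow_def by (simp add: power_add mult_ac)
qed

lemma theta_pow_add_le:
  "theta_pow (a + d) \<le> theta_pow a * D1 ^ d * r ^ (d * (2 * a + d + 1))"
  unfolding theta_pow_add using theta_pow_pos[of a] D_pos D_le_D1 r_pos
  by (intro mult_right_mono mult_left_mono power_mono) auto

lemma theta_pow_Suc_le: "theta_pow (Suc k) \<le> D1 * theta_pow k"
proof -
  have "theta_pow (Suc k) \<le> theta_pow k * D1 * r ^ (2 * k + 2)"
    using theta_pow_add_le[of k 1] by simp
  also have "\<dots> \<le> theta_pow k * D1"
    using theta_pow_pos[of k] D1_ge_1 r_pos r_less_1
    by (intro mult_left_le power_le_one) auto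
  finally show ?thesis by (simp add: mult.commute)
qed

lemma theta_Suc_pow_le: "(D * r ^ Suc j) ^ Suc j \<le> D * theta_pow j"
proof -
  have "(D * r ^ Suc j) ^ Suc j = D * theta_pow j * r ^ Suc j"
    by (simp add: theta_pow_def power_mult_distrib power_mult[symmetric] power_add mult_ac)
  also have "\<dots> \<le> D * theta_pow j"
    using theta_pow_pos[of j] D_pos r_pos r_less_1 by (intro mult_left_le power_le_one) auto
  finally show ?thesis .
qed

definition k0 :: nat where "k0 = (LEAST k. D1 * r ^ k \<le> 1)"

lemma D1_r_pow_le_1: assumes "k \<ge> k0" shows "D1 * r ^ k \<le> 1"
proof -
  obtain k' where "r ^ k' < 1 / D1"
    using real_arch_pow_inv[of "1 / D1" r] D1_ge_1 r_less_1 by auto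
  then have "D1 * r ^ k' \<le> 1" using D1_ge_1 by (simp add: field_simps)
  then have "D1 * r ^ k0 \<le> 1" unfolding k0_def by (rule LeastI)
  moreover have "r ^ k \<le> r ^ k0" using assms r_pos r_less_1 by (intro power_decreasing) auto
  ultimately show ?thesis using D1_ge_1 by (meson mult_left_mono order_trans zero_le_one le_trans)
qed

definition P :: real where "P = D1 ^ k0"

lemma P_ge_1: "P \<ge> 1" unfolding P_def using D1_ge_1 by simp

lemma theta_pow_ratio_le:
  assumes "a \<le> b" shows "theta_pow b \<le> theta_pow a * (D1 * r ^ (b + 1)) ^ (b - a)"
proof -
  define d where "d = b - a"
  have b: "b = a + d" using assms d_def by simp
  have "theta_pow b \<le> theta_pow a * D1 ^ d * r ^ (d * (2 * a + d + 1))"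
    unfolding b by (rule theta_pow_add_le)
  also have "\<dots> \<le> theta_pow a * D1 ^ d * r ^ (d * (b + 1))"
    using theta_pow_pos[of a] D1_ge_1 r_pos r_less_1 unfolding b
    by (intro mult_left_mono power_decreasing) auto
  also have "\<dots> = theta_pow a * (D1 * r ^ (b + 1)) ^ (b - a)"
    by (simp add: d_def power_mult_distrib power_mult[symmetric] mult.commute power_add[symmetric])
  finally show ?thesis .
qed

(* theta_pow need not be monotone when D > 1, but it grows by at most the factor P
   before the decay r^(k^2) takes over. *)
lemma theta_pow_le_P:
  assumes "a \<le> b" shows "theta_pow b \<le> P * theta_pow a"
proof -
  have "(D1 * r ^ (b + 1)) ^ (b - a) \<le> P"
  proof (cases "b + 1 \<ge> k0")
    case True
    then have "(D1 * r ^ (b + 1)) ^ (b - a) \<le> 1"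
      using D1_r_pow_le_1[of "b + 1"] D1_ge_1 r_pos by (intro power_le_one) auto
    then show ?thesis using P_ge_1 by simp
  next
    case False
    have "D1 * r ^ (b + 1) \<le> D1"
      using D1_ge_1 r_pos r_less_1 by (intro mult_left_le power_le_one) auto
    then have "(D1 * r ^ (b + 1)) ^ (b - a) \<le> D1 ^ (b - a)"
      using D1_ge_1 r_pos by (intro power_mono) auto
    also have "\<dots> \<le> D1 ^ k0" using False D1_ge_1 by (intro power_increasing) auto
    finally show ?thesis by (simp add: P_def)
  qed
  then show ?thesis
    using theta_pow_ratio_le[OF assms] theta_pow_pos[of a] by (simp add: mult.commute mult_left_mono order_trans)
qed

lemma theta_pow_shift_le:
  assumes "j + q \<ge> m" shows "theta_pow (j + q) \<le> D1 ^ q * r ^ (2 * q * (m - q)) * theta_pow j"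
proof -
  have "2 * q * (m - q) \<le> q * (2 * j + q + 1)"
  proof -
    have "m - q \<le> j" using assms by simp
    then have "2 * q * (m - q) \<le> 2 * q * j" by simp
    also have "\<dots> \<le> q * (2 * j + q + 1)" by (simp add: algebra_simps)
    finally show ?thesis .
  qed
  then have "r ^ (q * (2 * j + q + 1)) \<le> r ^ (2 * q * (m - q))"
    using r_pos r_less_1 by (intro power_decreasing) auto
  then have "theta_pow j * D1 ^ q * r ^ (q * (2 * j + q + 1)) \<le> theta_pow j * D1 ^ q * r ^ (2 * q * (m - q))"
    using theta_pow_pos[of j] D1_ge_1 by (intro mult_left_mono) auto
  with theta_pow_add_le[of j q] show ?thesis by (simp add: mult_ac)
qed

lemma theta_pow_max_le:
  "theta_pow (max (j + q) m) \<le> P * D1 ^ q * r ^ (2 * q * (m - q)) * theta_pow j"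
proof (cases "j + q \<ge> m")
  case True
  have "theta_pow (j + q) \<le> 1 * (D1 ^ q * r ^ (2 * q * (m - q)) * theta_pow j)"
    using theta_pow_shift_le[OF True] by simp
  also have "\<dots> \<le> P * (D1 ^ q * r ^ (2 * q * (m - q)) * theta_pow j)"
    using P_ge_1 theta_pow_pos[of j] D1_ge_1 r_pos by (intro mult_right_mono) auto
  finally show ?thesis using True by (simp add: mult_ac)
next
  case False
  then have m: "max (j + q) m = (m - q) + q" by simp
  have "theta_pow (max (j + q) m) \<le> D1 ^ q * r ^ (2 * q * (m - q)) * theta_pow (m - q)"
    unfolding m by (rule theta_pow_shift_le) simp
  also have "\<dots> \<le> D1 ^ q * r ^ (2 * q * (m - q)) * (P * theta_pow j)"
    using False D1_ge_1 r_pos by (intro mult_left_mono theta_pow_le_P) auto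
  finally show ?thesis by (simp add: mult_ac)
qed

lemma theta_pow_le_r_pow:
  assumes "m \<ge> 2 * q + k0" shows "theta_pow m \<le> r ^ (2 * q * (m - q))"
proof -
  have "theta_pow m \<le> (D1 * r ^ (m + 1)) ^ m" using theta_pow_ratio_le[of 0 m] by simp
  also have "\<dots> \<le> (r ^ (2 * q)) ^ m"
  proof (intro power_mono)
    have "D1 * r ^ (m + 1) = r ^ (2 * q) * (D1 * r ^ (m + 1 - 2 * q))"
      using assms by (simp flip: power_add mult.left_commute)
    also have "\<dots> \<le> r ^ (2 * q)"
      using assms r_pos by (intro mult_left_le D1_r_pow_le_1) auto
    finally show "D1 * r ^ (m + 1) \<le> r ^ (2 * q)" .
  qed (use D1_ge_1 r_pos in auto)
  also have "\<dots> \<le> r ^ (2 * q * (m - q))"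
    unfolding power_mult[symmetric] using r_pos r_less_1 by (intro power_decreasing) auto
  finally show ?thesis .
qed

section \<open>A Lasota--Yorke inequality\<close>

lemma sup_var_bound_nonneg:
  assumes "sup_var_bound N A f s a" shows "s \<ge> 0" "a j \<ge> 0"
proof -
  obtain \<omega> where "\<omega> \<in> Sig N A" using Sig_nonempty by blast
  then show "s \<ge> 0" "a j \<ge> 0"
    using sup_var_boundD(1)[OF assms] sup_var_boundD(2)[OF assms, of \<omega> \<omega> j]
    by (auto intro: order_trans[OF norm_ge_zero])
qed

definition E :: "real \<Rightarrow> real" where "E b2 = b2 * exp (b2 * D * P)"

lemma norm_exp_g_diff_le:
  assumes "g \<in> Vsp N A" "condH N A \<Theta> b1 b2 g" "b2 > 0"
    and "x \<in> Sig N A" "y \<in> Sig N A" "\<forall>i<Suc j. x i = y i"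
  shows "cmod (exp (g x) - exp (g y)) \<le> b1 * (E b2 * D * theta_pow j)"
proof -
  have "cmod (g x - g y) \<le> var N A (Suc j) g"
    using assms by (intro norm_diff_le_var) (auto simp: Vsp_def)
  also have "\<dots> \<le> b2 * (D * r ^ Suc j) ^ Suc j"
    using assms(2)[unfolded condH_def, THEN conjunct2, rule_format, of "Suc j"] by simp
  also have "\<dots> \<le> b2 * (D * theta_pow j)"
    using assms(3) by (intro mult_left_mono theta_Suc_pow_le) simp
  finally have gd: "cmod (g x - g y) \<le> b2 * (D * theta_pow j)" .
  have "theta_pow j \<le> P" using theta_pow_le_P[of 0 j] by simp
  then have "b2 * (D * theta_pow j) \<le> b2 * D * P"
    using assms(3) D_pos by (simp add: mult.assoc)
  with gd have "exp (cmod (g x - g y)) \<le> exp (b2 * D * P)" by simp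
  moreover have "exp (Re (g y)) \<le> b1" using assms(2,5) by (simp add: condH_def)
  moreover have "b1 \<ge> 0" using calculation(2) by (rule order_trans[OF exp_ge_zero])
  ultimately have "exp (Re (g y)) * exp (cmod (g x - g y)) * cmod (g x - g y)
      \<le> b1 * exp (b2 * D * P) * (b2 * (D * theta_pow j))"
    using gd by (intro mult_mono) simp_all
  with norm_exp_diff_le[of "g x" "g y"] show ?thesis by (simp add: E_def mult_ac)
qed

lemma norm_exp_mult_diff_le:
  assumes g: "g \<in> Vsp N A" "condH N A \<Theta> b1 b2 g" "b2 > 0" and f: "sup_var_bound N A f s a"
    and xy: "x \<in> Sig N A" "y \<in> Sig N A" "\<forall>i<Suc j. x i = y i"
  shows "cmod (exp (g x) * f x - exp (g y) * f y) \<le> b1 * (a (Suc j) + E b2 * D * theta_pow j * s)"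
proof -
  have b1: "b1 \<ge> 0" using g(2) xy(1) by (auto simp: condH_def intro: order_trans[OF exp_ge_zero])
  have "exp (g x) * f x - exp (g y) * f y = (exp (g x) - exp (g y)) * f x + exp (g y) * (f x - f y)"
    by (simp add: algebra_simps)
  then have "cmod (exp (g x) * f x - exp (g y) * f y)
      \<le> cmod (exp (g x) - exp (g y)) * cmod (f x) + cmod (exp (g y)) * cmod (f x - f y)"
    by (metis norm_mult norm_triangle_ineq)
  also have "\<dots> \<le> b1 * (E b2 * D * theta_pow j) * s + b1 * a (Suc j)"
  proof (rule add_mono)
    show "cmod (exp (g x) - exp (g y)) * cmod (f x) \<le> b1 * (E b2 * D * theta_pow j) * s"
      using b1 g(3) D_pos theta_pow_pos[of j]
      by (intro mult_mono norm_exp_g_diff_le[OF g xy] sup_var_boundD(1)[OF f xy(1)]) (simp_all add: E_def)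
    show "cmod (exp (g y)) * cmod (f x - f y) \<le> b1 * a (Suc j)"
      using b1 g(2) xy(2) by (intro mult_mono sup_var_boundD(2)[OF f xy]) (simp_all add: condH_def)
  qed
  finally show ?thesis by (simp add: algebra_simps)
qed

lemma norm_Lop_le:
  assumes "condH N A \<Theta> b1 b2 g" "b1 > 0" and f: "sup_var_bound N A f s a" and w: "\<omega> \<in> Sig N A"
  shows "cmod (Lop N A g f \<omega>) \<le> real N * b1 * s"
proof -
  have "cmod (exp (g \<omega>')) * cmod (f \<omega>') \<le> b1 * s" if "\<omega>' \<in> Sig N A" for \<omega>'
    using assms(1,2) that sup_var_boundD(1)[OF f that] by (intro mult_mono) (auto simp: condH_def)
  then have "cmod (Lop N A g f \<omega>) \<le> real N * (b1 * s)"
    unfolding Lop_Sig[OF w] using assms(2) sup_var_bound_nonneg(1)[OF f] Sig_case_nat[OF w]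
    by (intro norm_sum_le_N) (auto simp: norm_mult)
  then show ?thesis by (simp add: mult_ac)
qed

lemma norm_Lop_diff_le:
  assumes g: "g \<in> Vsp N A" "condH N A \<Theta> b1 b2 g" "b1 > 0" "b2 > 0" and f: "sup_var_bound N A f s a"
    and w: "\<omega> \<in> Sig N A" "\<omega>' \<in> Sig N A" and agree: "\<forall>i<j. \<omega> i = \<omega>' i" and "j > 0"
  shows "cmod (Lop N A g f \<omega> - Lop N A g f \<omega>') \<le> real N * b1 * (a (Suc j) + E b2 * D * theta_pow j * s)"
proof -
  let ?I = "\<lambda>\<omega>. {i. i < N \<and> A i (\<omega> 0) = 1}"
  have \<omega>0: "\<omega>' 0 = \<omega> 0" using agree \<open>j > 0\<close> by auto
  then have I_eq: "?I \<omega>' = ?I \<omega>" by simp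
  have "\<forall>i'<Suc j. case_nat i \<omega> i' = case_nat i \<omega>' i'" for i
    using agree by (auto simp: less_Suc_eq_0_disj)
  then have summand: "cmod (exp (g (case_nat i \<omega>)) * f (case_nat i \<omega>) - exp (g (case_nat i \<omega>')) * f (case_nat i \<omega>'))
      \<le> b1 * (a (Suc j) + E b2 * D * theta_pow j * s)" if "i \<in> ?I \<omega>" for i
    using that \<omega>0 Sig_case_nat[OF w(1)] Sig_case_nat[OF w(2)]
    by (intro norm_exp_mult_diff_le[OF g(1,2,4) f]) auto
  have "Lop N A g f \<omega> - Lop N A g f \<omega>' = (\<Sum>i\<in>?I \<omega>.
      exp (g (case_nat i \<omega>)) * f (case_nat i \<omega>) - exp (g (case_nat i \<omega>')) * f (case_nat i \<omega>'))"
    unfolding Lop_Sig[OF w(1)] Lop_Sig[OF w(2)] I_eq by (simp add: sum_subtractf)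
  also have "cmod \<dots> \<le> real N * (b1 * (a (Suc j) + E b2 * D * theta_pow j * s))"
    using g(3,4) D_pos theta_pow_pos[of j] sup_var_bound_nonneg[OF f]
    by (intro norm_sum_le_N summand) (auto simp: E_def)
  finally show ?thesis by (simp add: mult_ac)
qed

lemma sup_var_bound_Lop:
  assumes g: "g \<in> Vsp N A" "condH N A \<Theta> b1 b2 g" "b1 > 0" "b2 > 0"
    and f: "sup_var_bound N A f s a"
  shows "sup_var_bound N A (Lop N A g f) (real N * b1 * s)
     (\<lambda>j. if j = 0 then 2 * real N * b1 * s else real N * b1 * (a (Suc j) + E b2 * D * theta_pow j * s))"
  unfolding sup_var_bound_def
proof (intro conjI ballI allI impI)
  fix j \<omega> \<omega>' assume w: "\<omega> \<in> Sig N A" "\<omega>' \<in> Sig N A" and "\<forall>i<j. \<omega> i = \<omega>' i"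
  moreover have "cmod (Lop N A g f \<omega> - Lop N A g f \<omega>') \<le> real N * b1 * s + real N * b1 * s"
    using norm_triangle_ineq4 add_mono[OF norm_Lop_le[OF g(2,3) f w(1)] norm_Lop_le[OF g(2,3) f w(2)]]
    by (rule order_trans)
  ultimately show "cmod (Lop N A g f \<omega> - Lop N A g f \<omega>')
    \<le> (if j = 0 then 2 * real N * b1 * s else real N * b1 * (a (Suc j) + E b2 * D * theta_pow j * s))"
    using norm_Lop_diff_le[OF g f] by (auto simp: mult_ac)
qed (rule norm_Lop_le[OF g(2,3) f])

definition M :: "real \<Rightarrow> real \<Rightarrow> real" where "M b1 b2 = real N * b1 * D1 * (1 + E b2 * D)"

lemma M_bounds:
  assumes "b1 > 0" "b2 > 0"
  shows "M b1 b2 > 0" "real N * b1 \<le> M b1 b2" "real N * b1 * D1 \<le> M b1 b2"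
    "real N * b1 * (E b2 * D) \<le> M b1 b2"
proof -
  have K: "real N * b1 > 0" using N_pos assms by simp
  have ED: "E b2 * D > 0" using assms(2) D_pos by (simp add: E_def)
  have "real N * b1 * D1 > 0" using K D1_ge_1 by simp
  then show "real N * b1 * D1 \<le> M b1 b2"
    unfolding M_def using ED by (simp add: mult_le_cancel_left1)
  moreover have "real N * b1 \<le> real N * b1 * D1" using K D1_ge_1 by (simp add: mult_le_cancel_left1)
  ultimately show "real N * b1 \<le> M b1 b2" by linarith
  then show "M b1 b2 > 0" using K by linarith
  have "E b2 * D \<le> D1 * (1 + E b2 * D)" using D1_ge_1 ED by (smt (verit) mult_le_cancel_right1)
  from mult_left_mono[OF this, of "real N * b1"] K
  show "real N * b1 * (E b2 * D) \<le> M b1 b2" by (simp add: M_def mult_ac)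
qed

lemma Lop_var_step_le:
  assumes "b1 > 0" "b2 > 0" "X \<ge> 0" "s \<ge> 0" "\<alpha> \<ge> 0"
  shows "real N * b1 * (X * (\<alpha> + 2 * real t * s * theta_pow (Suc j)) + E b2 * D * theta_pow j * (X * s))
    \<le> M b1 b2 * X * (\<alpha> + 2 * real (Suc t) * s * theta_pow j)"
proof -
  define K where "K = real N * b1"
  note M = M_bounds[OF assms(1,2), folded K_def]
  have w: "theta_pow j \<ge> 0" using theta_pow_pos[of j] by simp
  have K0: "K \<ge> 0" using assms(1) by (simp add: K_def)
  have "K * (X * \<alpha>) \<le> M b1 b2 * X * \<alpha>"
    using mult_right_mono[OF M(2), of "X * \<alpha>"] assms(3,5) by (simp add: mult_ac)
  moreover have "K * (X * (2 * real t * s * theta_pow (Suc j))) \<le> M b1 b2 * X * (2 * real t * s * theta_pow j)"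
  proof -
    have "K * (X * (2 * real t * s * theta_pow (Suc j))) \<le> K * (X * (2 * real t * s * (D1 * theta_pow j)))"
      using K0 assms(3,4) theta_pow_Suc_le[of j] by (intro mult_left_mono) auto
    also have "\<dots> = K * D1 * (X * (2 * real t * s * theta_pow j))" by (simp add: mult_ac)
    also have "\<dots> \<le> M b1 b2 * X * (2 * real t * s * theta_pow j)"
      using mult_right_mono[OF M(3), of "X * (2 * real t * s * theta_pow j)"] assms(3,4) w
      by (simp add: mult_ac)
    finally show ?thesis .
  qed
  moreover have "K * (E b2 * D * theta_pow j * (X * s)) \<le> M b1 b2 * X * (2 * s * theta_pow j)"
  proof -
    have "K * (E b2 * D * theta_pow j * (X * s)) = K * (E b2 * D) * (X * s * theta_pow j)"
      by (simp add: mult_ac)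
    also have "\<dots> \<le> M b1 b2 * (X * s * theta_pow j)"
      using M(4) assms(3,4) w by (intro mult_right_mono) auto
    also have "\<dots> \<le> M b1 b2 * X * (2 * s * theta_pow j)"
      using M(1) assms(3,4) w by (simp add: mult_ac mult_left_mono)
    finally show ?thesis .
  qed
  ultimately show ?thesis by (simp add: K_def algebra_simps)
qed

lemma sup_var_bound_Lpow:
  assumes g: "g \<in> Vsp N A" "condH N A \<Theta> b1 b2 g" "b1 > 0" "b2 > 0"
    and f: "sup_var_bound N A f s a"
  shows "sup_var_bound N A ((Lop N A g ^^ t) f) (M b1 b2 ^ t * s)
     (\<lambda>j. M b1 b2 ^ t * (a (j + t) + 2 * real t * s * theta_pow j))"
proof (induction t)
  case 0
  show ?case using f by simp
next
  case (Suc t)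
  have s0: "s \<ge> 0" and a0: "\<And>j. a j \<ge> 0" using sup_var_bound_nonneg[OF f] by auto
  note M = M_bounds[OF g(3,4)]
  have X0: "M b1 b2 ^ t \<ge> 0" using M(1) by simp
  show ?case unfolding funpow.simps(2) comp_apply
  proof (rule sup_var_bound_mono[OF sup_var_bound_Lop[OF g Suc.IH]])
    show "real N * b1 * (M b1 b2 ^ t * s) \<le> M b1 b2 ^ Suc t * s"
      using mult_right_mono[OF M(2), of "M b1 b2 ^ t * s"] X0 s0 by (simp add: mult_ac)
    fix j
    show "(if j = 0 then 2 * real N * b1 * (M b1 b2 ^ t * s) else real N * b1 *
        (M b1 b2 ^ t * (a (Suc j + t) + 2 * real t * s * theta_pow (Suc j)) + E b2 * D * theta_pow j * (M b1 b2 ^ t * s)))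
      \<le> M b1 b2 ^ Suc t * (a (j + Suc t) + 2 * real (Suc t) * s * theta_pow j)"
    proof (cases "j = 0")
      case True
      have "real N * b1 * M b1 b2 ^ t * (2 * s) \<le> M b1 b2 * M b1 b2 ^ t * (a (Suc t) + 2 * real (Suc t) * s)"
        using M(1,2) X0 s0 a0[of "Suc t"] by (intro mult_mono) (auto simp: algebra_simps)
      then show ?thesis using True by (simp add: mult_ac)
    next
      case False
      then show ?thesis
        using Lop_var_step_le[OF g(3,4) X0 s0 a0[of "j + Suc t"], where t=t and j=j] by simp
    qed
  qed
qed

lemma sup_var_bound_var:
  assumes "sup_var_bound N A f s a"
  shows "bdd_above (varset N A k f)" "var N A k f \<le> a k"
proof -
  have ub: "\<And>x. x \<in> varset N A k f \<Longrightarrow> x \<le> a k"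
    unfolding varset_def using sup_var_boundD(2)[OF assms] by blast
  then show "bdd_above (varset N A k f)" by (rule bdd_aboveI)
  have "varset N A k f \<noteq> {}" using Sig_nonempty unfolding varset_def by blast
  then show "var N A k f \<le> a k" unfolding var_def using ub by (rule cSup_least)
qed

lemma sup_var_bound_supnorm:
  assumes "sup_var_bound N A f s a"
  shows "supnorm N A f \<le> s"
  unfolding supnorm_def using Sig_nonempty sup_var_boundD(1)[OF assms] by (intro cSup_least) auto

lemma supnorm_nonneg:
  assumes "bdd_above {cmod (f \<omega>) |\<omega>. \<omega> \<in> Sig N A}"
  shows "supnorm N A f \<ge> 0"
proof -
  obtain \<omega> where "\<omega> \<in> Sig N A" using Sig_nonempty by blast
  then have "cmod (f \<omega>) \<le> supnorm N A f" unfolding supnorm_def using assms by (intro cSup_upper) auto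
  then show ?thesis using norm_ge_zero order_trans by blast
qed

lemma Bconsts_bdd_below: "bdd_below (Bconsts N A \<theta> f)"
  by (rule bdd_belowI[of _ 0]) (auto simp: Bconsts_def)

lemma sup_var_bound_Bconsts:
  assumes "sup_var_bound N A f s (\<lambda>k. Z * theta_pow k)" "Z \<ge> 0"
  shows "Z \<in> Bconsts N A \<Theta> f"
  unfolding Bconsts_def using sup_var_bound_var(2)[OF assms(1)] assms(2) theta_pow_eq by simp

lemma sup_var_bound_Bnorm_le:
  assumes "sup_var_bound N A f s (\<lambda>k. Z * theta_pow k)" "Z \<ge> 0"
  shows "Bnorm N A \<Theta> f \<le> s + Z"
  unfolding Bnorm_def using sup_var_bound_supnorm[OF assms(1)]
    cInf_lower[OF sup_var_bound_Bconsts[OF assms] Bconsts_bdd_below] by simp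

lemma root_tendsto_0_if_le_theta_pow:
  assumes "\<And>k. 0 \<le> v k" "\<And>k. v k \<le> Z * theta_pow k" "Z \<ge> 0"
  shows "(\<lambda>k. v k powr (1 / real k)) \<longlonglongrightarrow> 0"
proof (rule tendsto_sandwich[where f="\<lambda>_. 0" and h="\<lambda>k. max 1 Z * D * r * r ^ k"])
  show "\<forall>\<^sub>F k in sequentially. v k powr (1 / real k) \<le> max 1 Z * D * r * r ^ k"
  proof (rule eventually_sequentiallyI[of 1])
    fix k :: nat assume k: "k \<ge> 1"
    have x0: "D * r ^ Suc k > 0" using D_pos r_pos by simp
    have "v k powr (1 / real k) \<le> (Z * theta_pow k) powr (1 / real k)"
      using assms by (intro powr_mono2) auto
    also have "\<dots> = Z powr (1 / real k) * (D * r ^ Suc k)"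
    proof -
      have "theta_pow k powr (1 / real k) = ((D * r ^ Suc k) powr real k) powr (1 / real k)"
        unfolding powr_realpow[OF x0] theta_pow_eq ..
      also have "\<dots> = D * r ^ Suc k" using k x0 by (simp add: powr_powr)
      finally show ?thesis using assms(3) theta_pow_pos[of k] by (simp add: powr_mult)
    qed
    also have "\<dots> \<le> max 1 Z * (D * r ^ Suc k)"
    proof (intro mult_right_mono)
      show "Z powr (1 / real k) \<le> max 1 Z"
      proof (cases "Z \<le> 1")
        case True
        then show ?thesis using assms(3) powr_le1[of "1 / real k" Z] by simp
      next
        case False
        then show ?thesis using k powr_mono[of "1 / real k" 1 Z] by simp
      qed
    qed (use x0 in simp)
    finally show "v k powr (1 / real k) \<le> max 1 Z * D * r * r ^ k" by (simp add: mult_ac)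
  qed
  show "(\<lambda>k. max 1 Z * D * r * r ^ k) \<longlonglongrightarrow> 0"
    using r_pos r_less_1 by (intro tendsto_mult_right_zero LIMSEQ_power_zero) auto
qed auto

lemma sup_var_bound_Bsp:
  assumes "sup_var_bound N A f s (\<lambda>k. Z * theta_pow k)" "Z \<ge> 0" "\<And>\<omega>. \<omega> \<notin> Sig N A \<Longrightarrow> f \<omega> = 0"
  shows "f \<in> Bsp N A \<Theta>"
proof -
  obtain \<omega> where \<omega>: "\<omega> \<in> Sig N A" using Sig_nonempty by blast
  have "0 \<le> var N A k f" for k
    using norm_diff_le_var[OF sup_var_bound_var(1)[OF assms(1)] \<omega> \<omega>] by simp
  then have "(\<lambda>k. var N A k f powr (1 / real k)) \<longlonglongrightarrow> 0"
    using sup_var_bound_var(2)[OF assms(1)] assms(2) by (rule root_tendsto_0_if_le_theta_pow)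
  then show ?thesis
    using sup_var_bound_var(1)[OF assms(1)] sup_var_bound_Bconsts[OF assms(1,2)] assms(3)
    by (auto simp: Bsp_def Vsp_def)
qed

lemma Bsp_sup_var_bound:
  assumes "\<phi> \<in> Bsp N A \<Theta>"
  defines "C \<equiv> Inf (Bconsts N A \<Theta> \<phi>)"
  shows "sup_var_bound N A \<phi> (supnorm N A \<phi>) (\<lambda>k. C * theta_pow k)" "C \<ge> 0" "supnorm N A \<phi> \<ge> 0"
    and "Bnorm N A \<Theta> \<phi> = supnorm N A \<phi> + C"
proof -
  have bdd: "\<And>k. bdd_above (varset N A k \<phi>)" and ne: "Bconsts N A \<Theta> \<phi> \<noteq> {}"
    using assms(1) unfolding Bsp_def Vsp_def by auto
  show "C \<ge> 0" unfolding C_def using ne by (intro cInf_greatest) (auto simp: Bconsts_def)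
  have var_le: "var N A k \<phi> \<le> C * theta_pow k" for k
  proof -
    have "var N A k \<phi> / theta_pow k \<le> C" unfolding C_def
    proof (rule cInf_greatest[OF ne])
      fix c assume "c \<in> Bconsts N A \<Theta> \<phi>"
      then have "var N A k \<phi> \<le> c * theta_pow k" unfolding Bconsts_def using theta_pow_eq by simp
      then show "var N A k \<phi> / theta_pow k \<le> c" using theta_pow_pos[of k] by (simp add: divide_simps)
    qed
    then show ?thesis using theta_pow_pos[of k] by (simp add: divide_simps)
  qed
  obtain \<omega>0 where \<omega>0: "\<omega>0 \<in> Sig N A" using Sig_nonempty by blast
  have bdd_sup: "bdd_above {cmod (\<phi> \<omega>) |\<omega>. \<omega> \<in> Sig N A}"
  proof (rule bdd_aboveI[of _ "cmod (\<phi> \<omega>0) + var N A 0 \<phi>"])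
    fix x assume "x \<in> {cmod (\<phi> \<omega>) |\<omega>. \<omega> \<in> Sig N A}"
    then obtain \<omega> where "x = cmod (\<phi> \<omega>)" "\<omega> \<in> Sig N A" by blast
    with norm_diff_le_var[OF bdd[of 0] this(2) \<omega>0] norm_triangle_sub[of "\<phi> \<omega>" "\<phi> \<omega>0"]
    show "x \<le> cmod (\<phi> \<omega>0) + var N A 0 \<phi>" by simp
  qed
  then show "supnorm N A \<phi> \<ge> 0" by (rule supnorm_nonneg)
  show "sup_var_bound N A \<phi> (supnorm N A \<phi>) (\<lambda>k. C * theta_pow k)"
    unfolding sup_var_bound_def supnorm_def
    using bdd_sup norm_diff_le_var[OF bdd] var_le by (auto intro: cSup_upper order_trans[OF _ var_le])
  show "Bnorm N A \<Theta> \<phi> = supnorm N A \<phi> + C" unfolding Bnorm_def C_def ..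
qed

lemma Bnorm_nonneg: "\<phi> \<in> Bsp N A \<Theta> \<Longrightarrow> Bnorm N A \<Theta> \<phi> \<ge> 0"
  using Bsp_sup_var_bound[of \<phi>] by simp

lemma zero_Bsp: "(\<lambda>\<omega>. 0) \<in> Bsp N A \<Theta>" "Bnorm N A \<Theta> (\<lambda>\<omega>. 0) = 0"
proof -
  have zero: "sup_var_bound N A (\<lambda>\<omega>. 0) 0 (\<lambda>k. 0 * theta_pow k)" unfolding sup_var_bound_def by simp
  show "(\<lambda>\<omega>. 0) \<in> Bsp N A \<Theta>" by (rule sup_var_bound_Bsp[OF zero]) auto
  then show "Bnorm N A \<Theta> (\<lambda>\<omega>. 0) = 0"
    using sup_var_bound_Bnorm_le[OF zero] Bnorm_nonneg by fastforce
qed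

lemma Bsp_diff:
  assumes "\<phi> \<in> Bsp N A \<Theta>" "\<psi> \<in> Bsp N A \<Theta>"
  shows "(\<lambda>\<omega>. \<phi> \<omega> - \<psi> \<omega>) \<in> Bsp N A \<Theta>"
    and "Bnorm N A \<Theta> (\<lambda>\<omega>. \<phi> \<omega> - \<psi> \<omega>) \<le> Bnorm N A \<Theta> \<phi> + Bnorm N A \<Theta> \<psi>"
proof -
  note \<phi> = Bsp_sup_var_bound[OF assms(1)] and \<psi> = Bsp_sup_var_bound[OF assms(2)]
  let ?C = "Inf (Bconsts N A \<Theta> \<phi>) + Inf (Bconsts N A \<Theta> \<psi>)"
  have diff: "sup_var_bound N A (\<lambda>\<omega>. \<phi> \<omega> - \<psi> \<omega>) (supnorm N A \<phi> + supnorm N A \<psi>) (\<lambda>k. ?C * theta_pow k)"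
    using sup_var_bound_diff[OF \<phi>(1) \<psi>(1)] by (simp add: distrib_right)
  have "?C \<ge> 0" using \<phi>(2) \<psi>(2) by simp
  moreover have "\<phi> \<omega> = 0" "\<psi> \<omega> = 0" if "\<omega> \<notin> Sig N A" for \<omega> using assms that by (auto simp: Bsp_def)
  ultimately show "(\<lambda>\<omega>. \<phi> \<omega> - \<psi> \<omega>) \<in> Bsp N A \<Theta>"
    and "Bnorm N A \<Theta> (\<lambda>\<omega>. \<phi> \<omega> - \<psi> \<omega>) \<le> Bnorm N A \<Theta> \<phi> + Bnorm N A \<Theta> \<psi>"
    using sup_var_bound_Bsp[OF diff] sup_var_bound_Bnorm_le[OF diff] \<phi>(4) \<psi>(4) by auto
qed

lemma opnorm_nonneg:
  assumes "\<forall>\<phi>\<in>Bsp N A \<Theta>. T \<phi> \<in> Bsp N A \<Theta> \<and> Bnorm N A \<Theta> (T \<phi>) \<le> K * Bnorm N A \<Theta> \<phi>"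
  shows "opnorm N A \<Theta> T \<ge> 0"
proof -
  let ?Y = "{Bnorm N A \<Theta> (T \<phi>) |\<phi>. \<phi> \<in> Bsp N A \<Theta> \<and> Bnorm N A \<Theta> \<phi> \<le> 1}"
  have "K * b \<le> max K 0" if "0 \<le> b" "b \<le> 1" for b
    using that mult_left_le[of b K] mult_nonpos_nonneg[of K b] by (cases "K \<ge> 0") auto
  then have "bdd_above ?Y"
    using assms Bnorm_nonneg by (intro bdd_aboveI[of _ "max K 0"]) (force intro: order_trans)
  moreover have "Bnorm N A \<Theta> (T (\<lambda>\<omega>. 0)) \<in> ?Y" using zero_Bsp by force
  moreover have "Bnorm N A \<Theta> (T (\<lambda>\<omega>. 0)) \<ge> 0" using assms zero_Bsp(1) Bnorm_nonneg by blast
  ultimately show ?thesis unfolding opnorm_def by (meson cSup_upper order_trans)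
qed

lemma opnorm_le:
  assumes "\<And>\<phi>. \<phi> \<in> Bsp N A \<Theta> \<Longrightarrow> Bnorm N A \<Theta> \<phi> \<le> 1 \<Longrightarrow> Bnorm N A \<Theta> (T \<phi>) \<le> c"
  shows "opnorm N A \<Theta> T \<le> c"
  unfolding opnorm_def using assms zero_Bsp by (intro cSup_least) force+

(* approx_num is an infimum, so bounding it by one candidate needs the candidate set to be
   bounded below; opnorm of an operator that is not bounded on B would be the Sup of an
   unbounded set, about which nothing is known. *)
lemma approx_num_le_opnorm:
  assumes T: "bounded_op N A \<Theta> T" and S: "bounded_op N A \<Theta> S" "rank_lt N A \<Theta> S n"
  shows "approx_num N A \<Theta> n T \<le> opnorm N A \<Theta> (\<lambda>\<phi> \<omega>. T \<phi> \<omega> - S \<phi> \<omega>)"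
proof -
  obtain K where K: "\<forall>\<phi>\<in>Bsp N A \<Theta>. T \<phi> \<in> Bsp N A \<Theta> \<and> Bnorm N A \<Theta> (T \<phi>) \<le> K * Bnorm N A \<Theta> \<phi>"
    using T unfolding bounded_op_def by blast
  have "opnorm N A \<Theta> (\<lambda>\<phi> \<omega>. T \<phi> \<omega> - S' \<phi> \<omega>) \<ge> 0" if S': "bounded_op N A \<Theta> S'" for S'
  proof -
    obtain K' where K': "\<forall>\<phi>\<in>Bsp N A \<Theta>. S' \<phi> \<in> Bsp N A \<Theta> \<and> Bnorm N A \<Theta> (S' \<phi>) \<le> K' * Bnorm N A \<Theta> \<phi>"
      using S' unfolding bounded_op_def by blast
    show ?thesis
    proof (rule opnorm_nonneg[where K="K + K'"], intro ballI conjI)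
      fix \<phi> assume "\<phi> \<in> Bsp N A \<Theta>"
      with K K' have "T \<phi> \<in> Bsp N A \<Theta>" "S' \<phi> \<in> Bsp N A \<Theta>"
        "Bnorm N A \<Theta> (T \<phi>) + Bnorm N A \<Theta> (S' \<phi>) \<le> (K + K') * Bnorm N A \<Theta> \<phi>"
        by (auto simp: distrib_right intro: add_mono)
      then show "(\<lambda>\<omega>. T \<phi> \<omega> - S' \<phi> \<omega>) \<in> Bsp N A \<Theta>"
        and "Bnorm N A \<Theta> (\<lambda>\<omega>. T \<phi> \<omega> - S' \<phi> \<omega>) \<le> (K + K') * Bnorm N A \<Theta> \<phi>"
        using Bsp_diff order_trans by blast+
    qed
  qed
  then have "bdd_below {opnorm N A \<Theta> (\<lambda>\<phi> \<omega>. T \<phi> \<omega> - S \<phi> \<omega>) |S. bounded_op N A \<Theta> S \<and> rank_lt N A \<Theta> S n}"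
    by (intro bdd_belowI[of _ 0]) auto
  then show ?thesis unfolding approx_num_def using S by (intro cInf_lower) auto
qed

lemma Lpow_sup_var_bound:
  assumes g: "g \<in> Vsp N A" "condH N A \<Theta> b1 b2 g" "b1 > 0" "b2 > 0"
    and f: "sup_var_bound N A f \<sigma> (\<lambda>k. C * theta_pow k)" and C: "C \<ge> 0"
  shows "sup_var_bound N A ((Lop N A g ^^ q) f) (M b1 b2 ^ q * \<sigma>)
    (\<lambda>j. M b1 b2 ^ q * (C * P + 2 * real q * \<sigma>) * theta_pow j)"
proof (rule sup_var_bound_mono[OF sup_var_bound_Lpow[OF g f] order_refl])
  fix j
  have Cle: "C * theta_pow (j + q) \<le> C * (P * theta_pow j)"
    using C theta_pow_le_P[of j "j + q"] by (simp add: mult_left_mono)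
  show "M b1 b2 ^ q * (C * theta_pow (j + q) + 2 * real q * \<sigma> * theta_pow j)
      \<le> M b1 b2 ^ q * (C * P + 2 * real q * \<sigma>) * theta_pow j"
    using mult_left_mono[OF Cle, of "M b1 b2 ^ q"] M_bounds[OF g(3,4)] by (simp add: algebra_simps)
qed

lemma Lpow_Bsp:
  assumes g: "g \<in> Vsp N A" "condH N A \<Theta> b1 b2 g" "b1 > 0" "b2 > 0" and \<phi>: "\<phi> \<in> Bsp N A \<Theta>"
  shows "(Lop N A g ^^ q) \<phi> \<in> Bsp N A \<Theta>"
    and "Bnorm N A \<Theta> ((Lop N A g ^^ q) \<phi>) \<le> M b1 b2 ^ q * (P + 2 * real q + 1) * Bnorm N A \<Theta> \<phi>"
proof -
  note B = Bsp_sup_var_bound[OF \<phi>]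
  let ?\<sigma> = "supnorm N A \<phi>" and ?C = "Inf (Bconsts N A \<Theta> \<phi>)" and ?X = "M b1 b2 ^ q"
  note L = Lpow_sup_var_bound[OF g B(1,2), of q]
  have X: "?X > 0" using M_bounds[OF g(3,4)] by simp
  have Z: "?X * (?C * P + 2 * real q * ?\<sigma>) \<ge> 0" using X B(2,3) P_ge_1 by simp
  have "(Lop N A g ^^ q) \<phi> \<omega> = 0" if "\<omega> \<notin> Sig N A" for \<omega>
    using \<phi> that Lpow_not_Sig[of q \<omega>] by (cases q) (auto simp: Bsp_def)
  then show "(Lop N A g ^^ q) \<phi> \<in> Bsp N A \<Theta>" using sup_var_bound_Bsp[OF L Z] by blast
  have "Bnorm N A \<Theta> ((Lop N A g ^^ q) \<phi>) \<le> ?X * ?\<sigma> + ?X * (?C * P + 2 * real q * ?\<sigma>)"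
    by (rule sup_var_bound_Bnorm_le[OF L Z])
  also have "\<dots> = ?X * ((2 * real q + 1) * ?\<sigma> + P * ?C)" by (simp add: algebra_simps)
  also have "\<dots> \<le> ?X * ((P + 2 * real q + 1) * (?\<sigma> + ?C))"
    using X B(2,3) P_ge_1 by (intro mult_left_mono) (auto simp: algebra_simps)
  finally show "Bnorm N A \<Theta> ((Lop N A g ^^ q) \<phi>) \<le> ?X * (P + 2 * real q + 1) * Bnorm N A \<Theta> \<phi>"
    using B(4) by (simp add: mult_ac)
qed

lemma Lpow_bounded_op:
  assumes "g \<in> Vsp N A" "condH N A \<Theta> b1 b2 g" "b1 > 0" "b2 > 0"
  shows "bounded_op N A \<Theta> (Lop N A g ^^ q)"
  unfolding bounded_op_def using Lpow_Bsp[OF assms] Lpow_lin[where d=1 and c=1] Lpow_lin[where d=0]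
  by (auto intro!: exI[of _ "M b1 b2 ^ q * (P + 2 * real q + 1)"])

section \<open>Cylinder approximation\<close>

lemma sup_var_bound_cyl_approx:
  assumes "sup_var_bound N A \<phi> \<sigma> (\<lambda>k. C * theta_pow k)"
  shows "sup_var_bound N A (cyl_approx N A m \<phi>) \<sigma> (\<lambda>k. C * theta_pow k)"
  unfolding sup_var_bound_def
proof (intro conjI ballI allI impI)
  fix \<omega> assume "\<omega> \<in> Sig N A"
  then show "cmod (cyl_approx N A m \<phi> \<omega>) \<le> \<sigma>"
    using sup_var_boundD(1)[OF assms cyl_rep(1)] by (simp add: cyl_approx_def)
next
  fix j \<omega> \<omega>' assume w: "\<omega> \<in> Sig N A" "\<omega>' \<in> Sig N A" and agree: "\<forall>i<j. \<omega> i = \<omega>' i"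
  show "cmod (cyl_approx N A m \<phi> \<omega> - cyl_approx N A m \<phi> \<omega>') \<le> C * theta_pow j"
  proof (cases "j \<ge> m")
    case True
    then have "cyl_word m \<omega> = cyl_word m \<omega>'" using agree by (simp add: cyl_word_eq_iff)
    then show ?thesis using w sup_var_bound_nonneg(2)[OF assms, of j] by (simp add: cyl_approx_def)
  next
    case False
    then have "\<forall>i<j. cyl_rep N A (cyl_word m \<omega>) i = cyl_rep N A (cyl_word m \<omega>') i"
      using cyl_rep(2)[OF w(1), of m] cyl_rep(2)[OF w(2), of m] agree by auto
    then show ?thesis
      using w sup_var_boundD(2)[OF assms cyl_rep(1)[OF w(1)] cyl_rep(1)[OF w(2)]] by (simp add: cyl_approx_def)
  qed
qed

lemma cyl_approx_Bsp:
  assumes "\<phi> \<in> Bsp N A \<Theta>"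
  shows "cyl_approx N A m \<phi> \<in> Bsp N A \<Theta>" "Bnorm N A \<Theta> (cyl_approx N A m \<phi>) \<le> Bnorm N A \<Theta> \<phi>"
  using sup_var_bound_Bsp[OF sup_var_bound_cyl_approx] sup_var_bound_Bnorm_le[OF sup_var_bound_cyl_approx]
    Bsp_sup_var_bound[OF assms] by (auto simp: cyl_approx_def)

lemma sup_var_bound_cyl_residual:
  assumes "sup_var_bound N A \<phi> \<sigma> (\<lambda>k. C * theta_pow k)"
  shows "sup_var_bound N A (\<lambda>\<omega>. \<phi> \<omega> - cyl_approx N A m \<phi> \<omega>) (C * theta_pow m) (\<lambda>j. 2 * C * theta_pow (max j m))"
proof -
  have C0: "C \<ge> 0"
    using sup_var_bound_nonneg(2)[OF assms, of 0] by simp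
  have sup: "cmod (\<phi> \<omega> - cyl_approx N A m \<phi> \<omega>) \<le> C * theta_pow m" if w: "\<omega> \<in> Sig N A" for \<omega>
    using w sup_var_boundD(2)[OF assms w cyl_rep(1)[OF w]] cyl_rep(2)[OF w] by (simp add: cyl_approx_def)
  show ?thesis unfolding sup_var_bound_def
  proof (intro conjI ballI allI impI)
    fix j \<omega> \<omega>' assume w: "\<omega> \<in> Sig N A" "\<omega>' \<in> Sig N A" and agree: "\<forall>i<j. \<omega> i = \<omega>' i"
    show "cmod (\<phi> \<omega> - cyl_approx N A m \<phi> \<omega> - (\<phi> \<omega>' - cyl_approx N A m \<phi> \<omega>')) \<le> 2 * C * theta_pow (max j m)"
    proof (cases "j \<ge> m")
      case True
      then have "cyl_word m \<omega> = cyl_word m \<omega>'" using agree by (simp add: cyl_word_eq_iff)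
      then have "cmod (\<phi> \<omega> - cyl_approx N A m \<phi> \<omega> - (\<phi> \<omega>' - cyl_approx N A m \<phi> \<omega>')) = cmod (\<phi> \<omega> - \<phi> \<omega>')"
        using w by (simp add: cyl_approx_def)
      also have "\<dots> \<le> C * theta_pow j" by (rule sup_var_boundD(2)[OF assms w agree])
      also have "\<dots> \<le> 2 * C * theta_pow (max j m)" using True C0 theta_pow_pos[of j] by simp
      finally show ?thesis .
    next
      case False
      have "cmod (\<phi> \<omega> - cyl_approx N A m \<phi> \<omega> - (\<phi> \<omega>' - cyl_approx N A m \<phi> \<omega>'))
          \<le> C * theta_pow m + C * theta_pow m"
        using norm_triangle_ineq4 add_mono[OF sup[OF w(1)] sup[OF w(2)]] by (rule order_trans)
      then show ?thesis using False by simp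
    qed
  qed (rule sup)
qed

definition cyl_Lpow :: "cfun \<Rightarrow> nat \<Rightarrow> nat \<Rightarrow> cfun \<Rightarrow> cfun" where
  "cyl_Lpow g q m \<phi> = (Lop N A g ^^ q) (cyl_approx N A m \<phi>)"

lemma cyl_Lpow_bounded_op:
  assumes g: "g \<in> Vsp N A" "condH N A \<Theta> b1 b2 g" "b1 > 0" "b2 > 0"
  shows "bounded_op N A \<Theta> (cyl_Lpow g q m)"
proof -
  let ?K = "M b1 b2 ^ q * (P + 2 * real q + 1)"
  have K: "?K \<ge> 0" using M_bounds[OF g(3,4)] P_ge_1 by simp
  have "cyl_Lpow g q m \<phi> \<in> Bsp N A \<Theta> \<and> Bnorm N A \<Theta> (cyl_Lpow g q m \<phi>) \<le> ?K * Bnorm N A \<Theta> \<phi>"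
    if "\<phi> \<in> Bsp N A \<Theta>" for \<phi>
    using Lpow_Bsp[OF g cyl_approx_Bsp(1)[OF that]] mult_left_mono[OF cyl_approx_Bsp(2)[OF that] K]
    unfolding cyl_Lpow_def by (blast intro: order_trans)
  then show ?thesis unfolding bounded_op_def cyl_Lpow_def cyl_approx_add cyl_approx_scale
    using Lpow_lin[where d=1 and c=1] Lpow_lin[where d=0] by (auto simp: cyl_Lpow_def)
qed

lemma cyl_Lpow_rank_lt:
  assumes "card (words N A m) < n"
  shows "rank_lt N A \<Theta> (cyl_Lpow g q m) n"
proof -
  obtain e where e: "bij_betw e {..<card (words N A m)} (words N A m)"
    using ex_bij_betw_nat_finite[OF finite_words, of N A m] unfolding atLeast0LessThan by blast
  show ?thesis unfolding rank_lt_def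
  proof (intro exI conjI ballI)
    fix \<phi>
    show "cyl_Lpow g q m \<phi> = (\<lambda>\<omega>. \<Sum>i<card (words N A m).
        (\<lambda>i. \<phi> (cyl_rep N A (e i))) i * (\<lambda>i. (Lop N A g ^^ q) (cyl_ind N A (e i))) i \<omega>)"
      unfolding cyl_Lpow_def cyl_approx_eq_sum sum.reindex_bij_betw[OF e, symmetric] Lpow_sum ..
  qed (rule assms)
qed

lemma Lpow_residual_Bnorm_le:
  assumes g: "g \<in> Vsp N A" "condH N A \<Theta> b1 b2 g" "b1 > 0" "b2 > 0"
    and \<phi>: "\<phi> \<in> Bsp N A \<Theta>" "Bnorm N A \<Theta> \<phi> \<le> 1"
  shows "Bnorm N A \<Theta> (\<lambda>\<omega>. (Lop N A g ^^ q) \<phi> \<omega> - cyl_Lpow g q m \<phi> \<omega>)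
     \<le> M b1 b2 ^ q * (2 * P * D1 ^ q * r ^ (2 * q * (m - q)) + (2 * real q + 1) * theta_pow m)"
proof -
  note B = Bsp_sup_var_bound[OF \<phi>(1)]
  define C where "C = Inf (Bconsts N A \<Theta> \<phi>)"
  define X where "X = M b1 b2 ^ q"
  define \<rho> where "\<rho> = P * D1 ^ q * r ^ (2 * q * (m - q))"
  have X0: "X > 0" using M_bounds[OF g(3,4)] by (simp add: X_def)
  have C: "C \<ge> 0" "C \<le> 1" using B(2,3,4) \<phi>(2) by (auto simp: C_def)
  have \<rho>0: "\<rho> \<ge> 0" using P_ge_1 D1_ge_1 r_pos by (simp add: \<rho>_def)
  have residual: "(\<lambda>\<omega>. (Lop N A g ^^ q) \<phi> \<omega> - cyl_Lpow g q m \<phi> \<omega>)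
      = (Lop N A g ^^ q) (\<lambda>\<omega>. \<phi> \<omega> - cyl_approx N A m \<phi> \<omega>)"
    unfolding cyl_Lpow_def using Lpow_lin[where c=1 and d="-1"] by simp
  have bound: "sup_var_bound N A ((Lop N A g ^^ q) (\<lambda>\<omega>. \<phi> \<omega> - cyl_approx N A m \<phi> \<omega>))
     (X * (C * theta_pow m)) (\<lambda>j. X * C * (2 * \<rho> + 2 * real q * theta_pow m) * theta_pow j)"
  proof (rule sup_var_bound_mono[OF sup_var_bound_Lpow[OF g sup_var_bound_cyl_residual[OF B(1)[folded C_def]],
          of q, folded X_def] order_refl])
    fix j
    have "theta_pow (max (j + q) m) \<le> \<rho> * theta_pow j" using theta_pow_max_le[of j q m] by (simp add: \<rho>_def)
    then have "C * theta_pow (max (j + q) m) \<le> C * (\<rho> * theta_pow j)" using C(1) by (rule mult_left_mono)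
    then have "2 * C * theta_pow (max (j + q) m) + 2 * real q * (C * theta_pow m) * theta_pow j
        \<le> C * (2 * \<rho> + 2 * real q * theta_pow m) * theta_pow j"
      by (simp add: algebra_simps)
    then show "X * (2 * C * theta_pow (max (j + q) m) + 2 * real q * (C * theta_pow m) * theta_pow j)
        \<le> X * C * (2 * \<rho> + 2 * real q * theta_pow m) * theta_pow j"
      using X0 by (simp add: mult.assoc mult_left_mono)
  qed
  have "Bnorm N A \<Theta> ((Lop N A g ^^ q) (\<lambda>\<omega>. \<phi> \<omega> - cyl_approx N A m \<phi> \<omega>))
      \<le> X * (C * theta_pow m) + X * C * (2 * \<rho> + 2 * real q * theta_pow m)"
    using X0 C \<rho>0 theta_pow_pos[of m] by (intro sup_var_bound_Bnorm_le[OF bound]) simp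
  also have "\<dots> = X * C * (2 * \<rho> + (2 * real q + 1) * theta_pow m)" by (simp add: algebra_simps)
  also have "\<dots> \<le> X * (2 * \<rho> + (2 * real q + 1) * theta_pow m)"
    using X0 C \<rho>0 theta_pow_pos[of m] by (simp add: mult_left_le_one_le mult.assoc)
  finally show ?thesis unfolding residual by (simp add: X_def \<rho>_def mult_ac)
qed

lemma approx_num_Lpow_le:
  assumes g: "g \<in> Vsp N A" "condH N A \<Theta> b1 b2 g" "b1 > 0" "b2 > 0"
    and card: "card (words N A m) < n"
  shows "approx_num N A \<Theta> n (Lop N A g ^^ q)
     \<le> M b1 b2 ^ q * (2 * P * D1 ^ q * r ^ (2 * q * (m - q)) + (2 * real q + 1) * theta_pow m)"
  using approx_num_le_opnorm[OF Lpow_bounded_op[OF g] cyl_Lpow_bounded_op[OF g] cyl_Lpow_rank_lt[OF card]]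
    opnorm_le[OF Lpow_residual_Bnorm_le[OF g]] by (rule order_trans)

section \<open>Entropy and the choice of the cylinder length\<close>

lemma card_words_pos: "card (words N A n) \<ge> 1"
proof -
  obtain \<omega> where "\<omega> \<in> Sig N A" using Sig_nonempty by blast
  then have "words N A n \<noteq> {}" using cyl_word_in_words by blast
  then show ?thesis using finite_words by (simp add: Suc_le_eq card_gt_0_iff)
qed

lemma ln_card_words_tendsto_htop: "(\<lambda>n. ln (real (card (words N A n))) / real n) \<longlonglongrightarrow> htop N A"
proof -
  let ?u = "\<lambda>n. ln (real (card (words N A n)))"
  have "?u (m + n) \<le> ?u m + ?u n" for m n
  proof -
    have "real (card (words N A (m + n))) \<le> real (card (words N A m)) * real (card (words N A n))"
      using card_words_add_le[of N A m n] by (metis of_nat_le_iff of_nat_mult)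
    then have "?u (m + n) \<le> ln (real (card (words N A m)) * real (card (words N A n)))"
      using card_words_pos[of "m + n"] by simp
    also have "\<dots> = ?u m + ?u n" using card_words_pos[of m] card_words_pos[of n] by (simp add: ln_mult)
    finally show ?thesis .
  qed
  then have "(\<lambda>n. ?u n / real n) \<longlonglongrightarrow> (INF n\<in>{1..}. ?u n / real n)"
    using card_words_pos by (intro subadditive_quotient_tendsto_Inf) simp_all
  moreover from this have "htop N A = (INF n\<in>{1..}. ?u n / real n)"
    unfolding htop_def by (rule limI)
  ultimately show ?thesis by simp
qed

lemma htop_nonneg: "htop N A \<ge> 0"
  using card_words_pos by (intro LIMSEQ_le_const[OF ln_card_words_tendsto_htop]) auto

lemma card_words_less_pow:
  assumes "R > exp (htop N A)"
  shows "\<exists>m0. \<forall>m\<ge>m0. real (card (words N A m)) < R ^ m"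
proof -
  have R: "R > 0" using assms by (meson exp_gt_zero less_trans)
  then have "htop N A < ln R" using assms by (metis exp_less_cancel_iff exp_ln)
  then obtain m0 where m0: "\<forall>m\<ge>m0. ln (real (card (words N A m))) / real m < ln R"
    using order_tendstoD(2)[OF ln_card_words_tendsto_htop] by (auto simp: eventually_sequentially)
  have "real (card (words N A m)) < R ^ m" if "m \<ge> max 1 m0" for m
  proof -
    have "ln (real (card (words N A m))) / real m < ln R" "real m > 0" using m0 that by auto
    then have "ln (real (card (words N A m))) < real m * ln R" by (simp add: divide_less_eq mult.commute)
    then have "exp (ln (real (card (words N A m)))) < exp (real m * ln R)" by simp
    then show ?thesis using card_words_pos[of m] R by (simp add: exp_of_nat_mult)
  qed
  then show ?thesis by blast
qed

lemma word_length_with_few_words: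
  assumes "R > exp (htop N A)" "R > 1"
  shows "\<exists>X. \<forall>x\<ge>X. \<exists>m\<ge>m1. real (card (words N A m)) < x \<and> real m > ln x / ln R - 1"
proof -
  obtain m0 where m0: "\<forall>m\<ge>m0. real (card (words N A m)) < R ^ m"
    using card_words_less_pow[OF assms(1)] by blast
  show ?thesis
  proof (intro exI[of _ "exp ((real (max m0 m1) + 1) * ln R)"] allI impI)
    fix x assume x: "exp ((real (max m0 m1) + 1) * ln R) \<le> x"
    then have x0: "x > 0" using exp_gt_zero order_less_le_trans by blast
    define m where "m = nat \<lfloor>ln x / ln R\<rfloor>"
    have "(real (max m0 m1) + 1) * ln R \<le> ln x" using x x0 by (simp add: ln_ge_iff)
    then have "real (max m0 m1) + 1 \<le> ln x / ln R" using assms(2) by (simp add: field_simps)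
    then have m: "real m \<le> ln x / ln R" "real m > ln x / ln R - 1" "m \<ge> m0" "m \<ge> m1"
      unfolding m_def by linarith+
    have "real (card (words N A m)) < R ^ m" using m0 m(3) by blast
    also have "\<dots> = exp (real m * ln R)" using assms(2) by (simp add: exp_of_nat_mult)
    also have "\<dots> \<le> x" using m(1) assms(2) x0 by (simp add: field_simps ln_ge_iff[symmetric])
    finally show "\<exists>m\<ge>m1. real (card (words N A m)) < x \<and> real m > ln x / ln R - 1"
      using m(2,4) by blast
  qed
qed

lemma approx_num_Lpow_0_le:
  assumes "g \<in> Vsp N A" "condH N A \<Theta> b1 b2 g" "b1 > 0" "b2 > 0" "n \<ge> 1"
  shows "approx_num N A \<Theta> n (Lop N A g ^^ 0) \<le> 1"
proof -
  have "bounded_op N A \<Theta> (\<lambda>\<phi> \<omega>. 0)" unfolding bounded_op_def using zero_Bsp by (auto intro!: exI[of _ 0])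
  moreover have "rank_lt N A \<Theta> (\<lambda>\<phi> \<omega>. 0) n" unfolding rank_lt_def using assms(5) by (intro exI[of _ 0]) auto
  ultimately have "approx_num N A \<Theta> n (Lop N A g ^^ 0) \<le> opnorm N A \<Theta> (\<lambda>\<phi> \<omega>. (Lop N A g ^^ 0) \<phi> \<omega> - 0)"
    by (rule approx_num_le_opnorm[OF Lpow_bounded_op[OF assms(1-4)]])
  also have "\<dots> \<le> 1" by (rule opnorm_le) simp
  finally show ?thesis .
qed

lemma approx_num_Lpow_le_r_pow:
  assumes g: "g \<in> Vsp N A" "condH N A \<Theta> b1 b2 g" "b1 > 0" "b2 > 0"
    and "card (words N A m) < n" "m \<ge> 2 * q + k0"
  shows "approx_num N A \<Theta> n (Lop N A g ^^ q)
    \<le> M b1 b2 ^ q * ((2 * P * D1 ^ q + 2 * real q + 1) * r ^ (2 * q * (m - q)))"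
proof -
  have "(2 * real q + 1) * theta_pow m \<le> (2 * real q + 1) * r ^ (2 * q * (m - q))"
    using theta_pow_le_r_pow[OF assms(6)] by (intro mult_left_mono) auto
  then have "2 * P * D1 ^ q * r ^ (2 * q * (m - q)) + (2 * real q + 1) * theta_pow m
      \<le> (2 * P * D1 ^ q + 2 * real q + 1) * r ^ (2 * q * (m - q))"
    by (simp add: algebra_simps)
  with approx_num_Lpow_le[OF g assms(5), of q] M_bounds[OF g(3,4)] show ?thesis
    by (meson order_trans mult_left_mono zero_le_power less_imp_le)
qed

lemma approx_num_Lpow_decay:
  assumes q: "q \<ge> 1" and R: "R > exp (htop N A)"
  shows "\<exists>N1::nat. \<forall>n\<ge>N1. \<forall>b1 b2. b1 > 0 \<longrightarrow> b2 > 0 \<longrightarrow>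
           (\<forall>g\<in>Vsp N A. condH N A \<Theta> b1 b2 g \<longrightarrow>
              approx_num N A \<Theta> n (Lop N A g ^^ q)
                \<le> (M b1 b2 / r\<^sup>2) ^ q * (real n - 1) powr (- 2 * real q * ln (1 / r) / ln R))"
proof -
  define R' where "R' = (exp (htop N A) + R) / 2"
  have R': "exp (htop N A) < R'" "R' < R" using R by (simp_all add: R'_def)
  moreover have "exp (htop N A) \<ge> 1" using htop_nonneg by simp
  ultimately have R'_gt_1: "1 < R'" by linarith
  define \<Gamma> where "\<Gamma> = 2 * P * D1 ^ q + 2 * real q + 1"
  have "\<Gamma> > 0" using P_ge_1 D1_ge_1 by (simp add: \<Gamma>_def add_pos_nonneg)
  then obtain X1 where X1: "\<forall>x\<ge>X1. \<forall>m\<ge>q. real m > ln x / ln R' - 1 \<longrightarrow>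
      \<Gamma> * r ^ (2 * q * (m - q)) \<le> (1 / r\<^sup>2) ^ q * x powr (- 2 * real q * ln (1 / r) / ln R)"
    using geometric_le_powr_eventually[OF r_pos r_less_1 _ _ _ q, of "ln R'" "ln R"] R' R'_gt_1 by auto
  obtain X2 where X2: "\<forall>x\<ge>X2. \<exists>m\<ge>2 * q + k0. real (card (words N A m)) < x \<and> real m > ln x / ln R' - 1"
    using word_length_with_few_words[OF R'(1) R'_gt_1] by blast
  show ?thesis
  proof (intro exI[of _ "nat \<lceil>max X1 X2\<rceil> + 1"] allI impI ballI)
    fix n :: nat and b1 b2 g
    assume n: "nat \<lceil>max X1 X2\<rceil> + 1 \<le> n" and b: "b1 > 0" "b2 > 0" and g: "g \<in> Vsp N A" "condH N A \<Theta> b1 b2 g"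
    define x where "x = real n - 1"
    have x: "x \<ge> X1" "x \<ge> X2" using n unfolding x_def by linarith+
    then obtain m where m: "m \<ge> 2 * q + k0" "real (card (words N A m)) < x" "real m > ln x / ln R' - 1"
      using X2 by blast
    then have "card (words N A m) < n" by (simp add: x_def)
    then have "approx_num N A \<Theta> n (Lop N A g ^^ q) \<le> M b1 b2 ^ q * (\<Gamma> * r ^ (2 * q * (m - q)))"
      unfolding \<Gamma>_def using approx_num_Lpow_le_r_pow[OF g b _ m(1)] by blast
    also have "\<dots> \<le> M b1 b2 ^ q * ((1 / r\<^sup>2) ^ q * x powr (- 2 * real q * ln (1 / r) / ln R))"
      using X1 x(1) m(1,3) M_bounds[OF b] by (intro mult_left_mono) auto
    finally show "approx_num N A \<Theta> n (Lop N A g ^^ q)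
        \<le> (M b1 b2 / r\<^sup>2) ^ q * (real n - 1) powr (- 2 * real q * ln (1 / r) / ln R)"
      by (simp add: x_def power_divide mult_ac)
  qed
qed

end

theorem corollary5p3:
  fixes N :: nat and A :: "nat \<Rightarrow> nat \<Rightarrow> nat" and D r :: real
  assumes "N \<ge> 1" and "zero_one_matrix N A" and "aperiodic N A"
    and "D > 0" and "0 < r" and "r < 1"
  shows "\<exists>C4 :: real \<Rightarrow> real \<Rightarrow> real.
           (\<forall>b1 b2. b1 > 0 \<longrightarrow> b2 > 0 \<longrightarrow> C4 b1 b2 > 0) \<and>
           (\<forall>(q::nat) (R::real). R > exp (htop N A) \<longrightarrow>
              (\<exists>N1::nat. \<forall>n\<ge>N1. \<forall>b1 b2. b1 > 0 \<longrightarrow> b2 > 0 \<longrightarrow>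
                 (\<forall>g\<in>Vsp N A. condH N A (\<lambda>m. D * r ^ m) b1 b2 g \<longrightarrow>
                    approx_num N A (\<lambda>m. D * r ^ m) n (Lop N A g ^^ q)
                      \<le> (C4 b1 b2 / r\<^sup>2) ^ q
                         * (real n - 1) powr (- 2 * real q * ln (1 / r) / ln R))))"
proof -
  interpret markov_shift N A D r
    using assms aperiodic_Sig_nonempty by unfold_locales auto
  show ?thesis
  proof (intro exI[of _ M] conjI allI impI)
    show "M b1 b2 > 0" if "b1 > 0" "b2 > 0" for b1 b2 using M_bounds(1)[OF that] .
    fix q :: nat and R :: real assume R: "R > exp (htop N A)"
    show "\<exists>N1::nat. \<forall>n\<ge>N1. \<forall>b1 b2. b1 > 0 \<longrightarrow> b2 > 0 \<longrightarrow>
        (\<forall>g\<in>Vsp N A. condH N A \<Theta> b1 b2 g \<longrightarrow>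
           approx_num N A \<Theta> n (Lop N A g ^^ q)
             \<le> (M b1 b2 / r\<^sup>2) ^ q * (real n - 1) powr (- 2 * real q * ln (1 / r) / ln R))"
    proof (cases "q = 0")
      case True
      then show ?thesis using approx_num_Lpow_0_le by (intro exI[of _ 2]) auto
    qed (use approx_num_Lpow_decay R in auto)
  qed
qed

end
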